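(* Let $K=2$ and $M\ge N$, and let the channel matrices $\mathbf H_1,\mathbf H_2\in\mathbb R^{N\times M}$, $\mathbf G_1,\mathbf G_2\in\mathbb R^{M\times N}$ be fixed and of full rank. Set $P_k=\beta_kP$ ($k=1,2$), $P_{\mathrm R,n}=\beta_{\mathrm R}P$ ($n\in\mathcal I_N$), and $\sigma_1^2=\sigma_2^2=\sigma_{\mathrm R}^2=\sigma^2$, with $\beta_1,\beta_2,\beta_{\mathrm R},\sigma^2>0$ fixed. If $\alpha\in(0,\tfrac12)\cup(\tfrac12,1)$, then $$\lim_{P/\sigma^2\to\infty}\big(R_{\mathrm{cut}}-R_{\mathrm{dist}}\big)=0,$$ i.e. the proposed distributed-relaying lattice coding scheme asymptotically achieves the (cut-set) sum-rate capacity bound of the MIMO two-way distributed-relay channel.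
   Context: Notation: $\mathcal I_L=\{1,\dots,L\}$; $[x]^+=\max\{x,0\}$; logarithms base 2. RQ decomposition $\mathbf H_k=\mathbf R_k\mathbf U_k$ with $\mathbf R_k\in\mathbb R^{N\times N}$ upper triangular, $\mathbf U_k\mathbf U_k^{\mathrm T}=\mathbf I_N$; $r_k(n,n)$ is the $(n,n)$ entry of $\mathbf R_k$; $\mathbf g_{n,k}$ is the $n$-th column of $\mathbf G_k$. $\alpha\in(0,1)$. $R_{\mathrm{dist}}$ (here with $K=2$) is the optimal value of: maximize $\sum_{k=1}^2\sum_{n=1}^N R_{k,n}$ over $P_{k,n}\ge0$, $R_{k,n}\ge0$ subject to $R_{k,n}\le\left[\frac{\alpha}{2}\log\frac{|r_k(n,n)|^2P_{k,n}}{\sigma_{\mathrm R}^2}\right]^+$ for all $k,n$; $\sum_{n\in\mathcal S}R_{k',n}\le\frac{1-\alpha}{2}\log\left|\mathbf I_M+\frac{1}{\sigma_k^2}\sum_{n\in\mathcal S}P_{\mathrm R,n}\mathbf g_{n,k}\mathbf g_{n,k}^{\mathrm T}\right|$ for all $\{k,k'\}=\{1,2\}$ and all $\mathcal S\subseteq\mathcal I_N$; and $\sum_{n=1}^NP_{k,n}\le P_k$ for $k=1,2$. $R_{\mathrm{cut}}$ (the cut-set sum-rate upper bound) is the optimal value of: maximize $R_1+R_2$ over positive semidefinite $\mathbf Q_1,\mathbf Q_2\in\mathbb R^{M\times M}$, $\mathbf Q_{\mathrm R}\in\mathbb R^{N\times N}$ and $R_1,R_2\ge0$, subject to $\mathrm{tr}(\mathbf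 Q_k)\le P_k$, $\mathrm{tr}(\mathbf Q_{\mathrm R})\le\sum_{n=1}^NP_{\mathrm R,n}$, and for $\{k,k'\}=\{1,2\}$: $R_{k'}\le\frac{\alpha}{2}\log\left|\mathbf I_N+\frac{1}{\sigma_{\mathrm R}^2}\mathbf H_{k'}\mathbf Q_{k'}\mathbf H_{k'}^{\mathrm T}\right|$ and $R_{k'}\le\frac{1-\alpha}{2}\log\left|\mathbf I_M+\frac{1}{\sigma_k^2}\mathbf G_k\mathbf Q_{\mathrm R}\mathbf G_k^{\mathrm T}\right|$. *)

theory Defs
  imports "HOL-Analysis.Analysis"
begin

definition upper_tri :: "real^('n::{finite,linorder})^('n::{finite,linorder}) \<Rightarrow> bool" where
  "upper_tri A \<longleftrightarrow> (\<forall>i j::'n. j < i \<longrightarrow> A $ i $ j = 0)"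

definition psd :: "real^'m^'m \<Rightarrow> bool" where
  "psd Q \<longleftrightarrow> transpose Q = Q \<and> (\<forall>x. 0 \<le> x \<bullet> (Q *v x))"

definition outer :: "real^'m \<Rightarrow> real^'m^'m" where
  "outer g = (\<chi> i j. g $ i * g $ j)"

definition pos :: "real \<Rightarrow> real" where
  "pos x = max x 0"

definition bc_bound :: "real \<Rightarrow> real \<Rightarrow> ('n::finite \<Rightarrow> real) \<Rightarrow> real^'n^'m \<Rightarrow> 'n set \<Rightarrow> real" where
  "bc_bound \<alpha> sk PR G S =
     (1 - \<alpha>) / 2 * log 2 (det (mat 1 + (1 / sk) *\<^sub>R (\<Sum>n\<in>S. PR n *\<^sub>R outer (column n G))))"

text \<open>Feasible sum-rates of the distributed-relaying problem (K = 2).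
  R1, R2 are the upper triangular RQ factors of H1, H2; sR, s1, s2 are the noise variances.\<close>
definition Rdist :: "real \<Rightarrow> real \<Rightarrow> real \<Rightarrow> ('n::finite \<Rightarrow> real) \<Rightarrow> real \<Rightarrow> real \<Rightarrow> real \<Rightarrow>
    real^'n^'n \<Rightarrow> real^'n^'n \<Rightarrow> real^'n^'m \<Rightarrow> real^'n^'m \<Rightarrow> real" where
  "Rdist \<alpha> P1 P2 PR sR s1 s2 R1 R2 G1 G2 =
     Sup {(\<Sum>n\<in>UNIV. Ra1 n) + (\<Sum>n\<in>UNIV. Ra2 n) | Ra1 Ra2 Pw1 Pw2.
        (\<forall>n. 0 \<le> Pw1 n \<and> 0 \<le> Pw2 n \<and> 0 \<le> Ra1 n \<and> 0 \<le> Ra2 n) \<and>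
        (\<forall>n. Ra1 n \<le> pos (\<alpha> / 2 * log 2 ((\<bar>R1 $ n $ n\<bar>)\<^sup>2 * Pw1 n / sR))) \<and>
        (\<forall>n. Ra2 n \<le> pos (\<alpha> / 2 * log 2 ((\<bar>R2 $ n $ n\<bar>)\<^sup>2 * Pw2 n / sR))) \<and>
        (\<forall>S. (\<Sum>n\<in>S. Ra1 n) \<le> bc_bound \<alpha> s2 PR G2 S) \<and>
        (\<forall>S. (\<Sum>n\<in>S. Ra2 n) \<le> bc_bound \<alpha> s1 PR G1 S) \<and>
        (\<Sum>n\<in>UNIV. Pw1 n) \<le> P1 \<and> (\<Sum>n\<in>UNIV. Pw2 n) \<le> P2}"

definition Rcut :: "real \<Rightarrow> real \<Rightarrow> real \<Rightarrow> ('n::finite \<Rightarrow> real) \<Rightarrow> real \<Rightarrow> real \<Rightarrow> real \<Rightarrow>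
    real^'m^'n \<Rightarrow> real^'m^'n \<Rightarrow> real^'n^'m \<Rightarrow> real^'n^'m \<Rightarrow> real" where
  "Rcut \<alpha> P1 P2 PR sR s1 s2 H1 H2 G1 G2 =
     Sup {Ra1 + Ra2 | Ra1 Ra2 (Q1::real^'m^'m) (Q2::real^'m^'m) (QR::real^'n^'n).
        psd Q1 \<and> psd Q2 \<and> psd QR \<and> 0 \<le> Ra1 \<and> 0 \<le> Ra2 \<and>
        trace Q1 \<le> P1 \<and> trace Q2 \<le> P2 \<and> trace QR \<le> (\<Sum>n\<in>UNIV. PR n) \<and>
        Ra1 \<le> \<alpha> / 2 * log 2 (det (mat 1 + (1 / sR) *\<^sub>R (H1 ** Q1 ** transpose H1))) \<and>
        Ra2 \<le> \<alpha> / 2 * log 2 (det (mat 1 + (1 / sR) *\<^sub>R (H2 ** Q2 ** transpose H2))) \<and>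
        Ra1 \<le> (1 - \<alpha>) / 2 * log 2 (det (mat 1 + (1 / s2) *\<^sub>R (G2 ** QR ** transpose G2))) \<and>
        Ra2 \<le> (1 - \<alpha>) / 2 * log 2 (det (mat 1 + (1 / s1) *\<^sub>R (G1 ** QR ** transpose G1)))}"

end

theory Submission
  imports Defs "HOL-Real_Asymp.Real_Asymp"
begin

(*
  At high SNR every log-determinant in the two optimisation problems is N log P plus a constant,
  up to o(1): the AM-GM inequality on eigenvalues bounds the cut-set terms from above, and
  det (I + c M) \<ge> c^N det M bounds them from below.  Since \<alpha> \<noteq> 1/2, the multiple-access terms
  (slope \<alpha>/2) and the broadcast terms (slope (1 - \<alpha>)/2) are eventually ordered, so R_cut and
  R_dist are both squeezed against the same asymptote, the sum over the two user pairs of the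
  smaller term.  For R_dist the witness puts equal power on the N streams of the triangular
  factor R_k and uses, on the broadcast side, successive-decoding rates: by the matrix determinant
  lemma they telescope to the full log-determinant, and every partial sum stays below the
  log-determinant of the corresponding subset of relays.
*)

lemma matrix_add_rdistrib: "(B + C) ** (A::'a::semiring_1^'p^'n) = B ** A + C ** A"
  by (vector matrix_matrix_mult_def sum.distrib distrib_right)

lemma matrix_diff_ldistrib: "(A::'a::ring_1^'n^'m) ** (B - C) = A ** B - A ** C"
  by (vector matrix_matrix_mult_def sum_subtractf right_diff_distrib)

lemma matrix_diff_rdistrib: "(B - C) ** (A::'a::ring_1^'p^'n) = B ** A - C ** A"
  by (vector matrix_matrix_mult_def sum_subtractf left_diff_distrib)

lemma matrix_neg_left [simp]: "(- A) ** (B::'a::ring_1^'p^'n) = - (A ** B)"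
  by (vector matrix_matrix_mult_def sum_negf)

lemma matrix_neg_right [simp]: "(A::'a::ring_1^'n^'m) ** (- B) = - (A ** B)"
  by (vector matrix_matrix_mult_def sum_negf)

lemma transpose_add: "transpose (A + B) = transpose A + transpose B"
  by (simp add: transpose_def vec_eq_iff)

lemma transpose_diff: "transpose (A - B) = transpose A - transpose (B::'a::ab_group_add^'n^'m)"
  by (simp add: transpose_def vec_eq_iff)

lemma transpose_zero [simp]: "transpose 0 = 0"
  by (simp add: transpose_def vec_eq_iff)

lemma matrix_mult_scaleR_left: "(c *\<^sub>R A) ** B = c *\<^sub>R (A ** (B::real^'p^'n))"
  and matrix_mult_scaleR_right: "A ** (c *\<^sub>R B) = c *\<^sub>R (A ** (B::real^'p^'n))"
  by (simp_all add: matrix_matrix_mult_def vec_eq_iff sum_distrib_left mult_ac)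

lemma matrix_vector_mult_scaleR_left: "(c *\<^sub>R A) *v x = c *\<^sub>R (A *v (x::real^'n))"
  by (simp add: vec_eq_iff matrix_vector_mult_def sum_distrib_left mult.assoc)

lemma matrix_vector_mult_sum_left: "(\<Sum>j\<in>J. A j) *v x = (\<Sum>j\<in>J. A j *v x)"
  by (induct J rule: infinite_finite_induct) (simp_all add: matrix_vector_mult_add_rdistrib)

lemma det_scaleR: "det (c *\<^sub>R (A::real^'n^'n)) = c ^ CARD('n) * det A"
proof -
  have "c *\<^sub>R A = mat c ** A"
    by (simp add: vec_eq_iff matrix_matrix_mult_def mat_def if_distrib[of "\<lambda>x. x * _"] cong: if_cong)
  moreover have "det (mat c :: real^'n^'n) = c ^ CARD('n)"
    by (subst det_diagonal) (auto simp: mat_def)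
  ultimately show ?thesis by (simp add: det_mul)
qed

lemma trace_scaleR: "trace (c *\<^sub>R (A::real^'n^'n)) = c * trace A"
  by (simp add: trace_def sum_distrib_left)

lemma matrix_inv_right: "invertible A \<Longrightarrow> A ** matrix_inv A = mat 1"
  and matrix_inv_left: "invertible A \<Longrightarrow> matrix_inv A ** A = mat 1"
  unfolding invertible_def matrix_inv_def by (metis (mono_tags, lifting) someI_ex)+

lemma matrix_inv_mult_cancel: "invertible A \<Longrightarrow> A *v (matrix_inv A *v x) = x"
  by (simp add: matrix_vector_mul_assoc matrix_inv_right)

lemma invertible_if_inj: "inj ((*v) (A::real^'n^'n)) \<Longrightarrow> invertible A"
  using full_rank_injective[of A] det_eq_0_rank[of A] invertible_det_nz[of A] by auto

lemma inner_matrix_sym: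
  assumes "transpose X = X"
  shows "x \<bullet> (X *v y) = (X *v x) \<bullet> (y::real^'n)"
  by (metis assms dot_lmul_matrix transpose_matrix_vector)

lemma inner_matrix_sandwich:
  "x \<bullet> ((A ** B ** transpose A) *v x) = (transpose A *v x) \<bullet> (B *v (transpose A *v (x::real^'n)))"
  by (metis dot_lmul_matrix matrix_vector_mul_assoc transpose_matrix_vector)

lemma transpose_mult_entry:
  "(transpose A ** B) $ i $ j = column i A \<bullet> column j (B::real^'p^'m)"
  by (simp add: transpose_def matrix_matrix_mult_def column_def inner_vec_def mult.commute)

lemma transpose_sandwich_entry:
  "(transpose A ** B ** C) $ i $ j = column i A \<bullet> (B *v column j (C::real^'p^'k))"
proof -
  have "(transpose A ** B ** C) $ i $ j = (transpose A ** (B ** C)) $ i $ j"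
    by (simp add: matrix_mul_assoc)
  also have "\<dots> = column i A \<bullet> (B *v column j C)"
    unfolding transpose_mult_entry
    by (metis (no_types) matrix_vector_mul_assoc matrix_vector_mult_basis)
  finally show ?thesis .
qed

lemma gram_eq_sum_outer: "A ** transpose A = (\<Sum>j\<in>UNIV. outer (column j (A::real^'n^'m)))"
  by (simp add: matrix_matrix_mult_def transpose_def outer_def column_def vec_eq_iff)

lemma outer_mult_vector: "outer g *v x = (g \<bullet> x) *\<^sub>R g"
  by (simp add: outer_def matrix_vector_mult_def vec_eq_iff inner_vec_def sum_distrib_left
      mult.commute mult.left_commute)


section \<open>Block matrices and Sylvester's determinant identity\<close>

lemma map_sum_permutes:
  assumes "p permutes (UNIV::'a set)" "q permutes (UNIV::'b set)"
  shows "map_sum p q permutes (UNIV::('a + 'b) set)"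
proof -
  have "map_sum (inv p) (inv q) \<circ> map_sum p q = id" "map_sum p q \<circ> map_sum (inv p) (inv q) = id"
    using permutes_inv_o[OF assms(1)] permutes_inv_o[OF assms(2)]
    by (simp_all add: map_sum.comp map_sum.id)
  then have "bij (map_sum p q)" by (metis o_bij)
  then show ?thesis by (intro bij_imp_permutes) auto
qed

lemma sign_map_sum:
  fixes p :: "'a::finite \<Rightarrow> 'a" and q :: "'b::finite \<Rightarrow> 'b"
  assumes p: "p permutes UNIV" and q: "q permutes UNIV"
  shows "sign (map_sum p q) = sign p * sign q"
proof -
  have left: "map_sum p id = map_permutation (UNIV::'a set) (Inl :: 'a \<Rightarrow> 'a + 'b) p"
    and right: "map_sum id q = map_permutation (UNIV::'b set) (Inr :: 'b \<Rightarrow> 'a + 'b) q"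
    by (rule ext, case_tac x, auto simp: map_permutation_def restrict_id_def)+
  have "sign (map_sum p (id::'b \<Rightarrow> 'b)) = sign p"
    unfolding left by (rule sign_map_permutation) (use p in auto)
  moreover have "sign (map_sum (id::'a \<Rightarrow> 'a) q) = sign q"
    unfolding right by (rule sign_map_permutation) (use q in auto)
  moreover have "map_sum p q = map_sum p id \<circ> map_sum id q" by (simp add: map_sum.comp)
  moreover have "permutation (map_sum p (id::'b \<Rightarrow> 'b))" "permutation (map_sum (id::'a \<Rightarrow> 'a) q)"
    using map_sum_permutes[OF p permutes_id] map_sum_permutes[OF permutes_id q]
    by (auto intro: permutes_imp_permutation)
  ultimately show ?thesis by (simp add: sign_compose)
qed

lemma permutes_sum_split:
  fixes p :: "('a::finite + 'b::finite) \<Rightarrow> ('a + 'b)"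
  assumes p: "p permutes UNIV" and r: "\<And>b. p (Inr b) \<in> range Inr"
  obtains p1 p2 where "p1 permutes UNIV" "p2 permutes UNIV" "p = map_sum p1 p2"
proof -
  have injp: "inj p" using p permutes_inj by blast
  have "p ` range Inr = range Inr"
    by (rule endo_inj_surj) (use r injp in \<open>auto simp: inj_on_def\<close>)
  have l: "p (Inl a) \<in> range Inl" for a
  proof (rule ccontr)
    assume "p (Inl a) \<notin> range Inl"
    then obtain c where c: "p (Inl a) = Inr c" by (cases "p (Inl a)") auto
    then obtain b where "p (Inr b) = Inr c" using \<open>p ` range Inr = range Inr\<close> by (metis imageE rangeI)
    with c injp show False by (metis inj_eq sum.distinct(1))
  qed
  define p1 where "p1 = (\<lambda>a. projl (p (Inl a)))"
  define p2 where "p2 = (\<lambda>b. projr (p (Inr b)))"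
  have pl: "p (Inl a) = Inl (p1 a)" and pr: "p (Inr b) = Inr (p2 b)" for a b
    using l[of a] r[of b] unfolding p1_def p2_def by auto
  have "inj p1" "inj p2" using injp unfolding inj_def by (metis pl sum.inject(1), metis pr sum.inject(2))
  then have "p1 permutes UNIV" "p2 permutes UNIV"
    by (auto intro!: bij_imp_permutes simp: bij_def finite_UNIV_inj_surj)
  moreover have "p = map_sum p1 p2"
  proof
    fix x show "p x = map_sum p1 p2 x" by (cases x) (auto simp: pl pr)
  qed
  ultimately show ?thesis by (rule that)
qed

lemma sum_UNIV_sum_type:
  "(\<Sum>i\<in>(UNIV::('a::finite + 'b::finite) set). f i) = (\<Sum>a\<in>UNIV. f (Inl a)) + (\<Sum>b\<in>UNIV. f (Inr b))"
  by (subst UNIV_Plus_UNIV[symmetric], subst sum.Plus) (auto simp: o_def)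

lemma prod_UNIV_sum_type:
  "(\<Prod>i\<in>(UNIV::('a::finite + 'b::finite) set). f i) = (\<Prod>a\<in>UNIV. f (Inl a)) * (\<Prod>b\<in>UNIV. f (Inr b))"
  by (subst UNIV_Plus_UNIV[symmetric], subst prod.Plus) (auto simp: o_def)

definition block_matrix ::
    "'a^'m^'m \<Rightarrow> 'a^'n^'m \<Rightarrow> 'a^'m^'n \<Rightarrow> 'a^'n^'n \<Rightarrow> 'a^('m::finite + 'n::finite)^('m + 'n)" where
  "block_matrix A B C D = (\<chi> i j. case i of
      Inl a \<Rightarrow> (case j of Inl b \<Rightarrow> A$a$b | Inr b \<Rightarrow> B$a$b)
    | Inr a \<Rightarrow> (case j of Inl b \<Rightarrow> C$a$b | Inr b \<Rightarrow> D$a$b))"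

lemma block_matrix_nth [simp]:
  "block_matrix A B C D $ Inl a $ Inl b = A$a$b" "block_matrix A B C D $ Inl a $ Inr b' = B$a$b'"
  "block_matrix A B C D $ Inr a' $ Inl b = C$a'$b" "block_matrix A B C D $ Inr a' $ Inr b' = D$a'$b'"
  by (simp_all add: block_matrix_def)

lemma block_matrix_mult:
  "block_matrix A B C D ** block_matrix A' B' C' D' =
   block_matrix (A**A' + B**C') (A**B' + B**D') (C**A' + D**C') (C**B' + D**D')"
proof -
  have "(block_matrix A B C D ** block_matrix A' B' C' D') $ i $ j =
        block_matrix (A**A' + B**C') (A**B' + B**D') (C**A' + D**C') (C**B' + D**D') $ i $ j" for i j
    by (cases i; cases j) (simp_all add: matrix_matrix_mult_def sum_UNIV_sum_type)
  then show ?thesis by (simp add: vec_eq_iff)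
qed

lemma transpose_block_matrix:
  "transpose (block_matrix A B C D) = block_matrix (transpose A) (transpose C) (transpose B) (transpose D)"
proof -
  have "transpose (block_matrix A B C D) $ i $ j =
        block_matrix (transpose A) (transpose C) (transpose B) (transpose D) $ i $ j" for i j
    by (cases i; cases j) (simp_all add: transpose_def)
  then show ?thesis by (simp add: vec_eq_iff)
qed

lemma det_block_upper_triangular:
  fixes A :: "'a::comm_ring_1^'m::finite^'m" and D :: "'a^'n::finite^'n"
  shows "det (block_matrix A B 0 D) = det A * det D"
proof -
  let ?E = "block_matrix A B 0 D"
  let ?f = "\<lambda>p. of_int (sign p) * (\<Prod>i\<in>UNIV. ?E $ i $ p i)"
  let ?G = "{p. p permutes (UNIV::('m + 'n) set) \<and> (\<forall>b. p (Inr b) \<in> range Inr)}"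
  let ?split = "\<lambda>(p1, p2). map_sum p1 p2"
  let ?P = "{p. p permutes (UNIV::'m set)} \<times> {p. p permutes (UNIV::'n set)}"
  have "det ?E = sum ?f ?G"
    unfolding det_def
  proof (rule sum.mono_neutral_right)
    show "\<forall>p\<in>{p. p permutes UNIV} - ?G. ?f p = 0"
    proof
      fix p assume "p \<in> {p. p permutes UNIV} - ?G"
      then obtain b where "p (Inr b) \<notin> range Inr" by auto
      then obtain a where "p (Inr b) = Inl a" by (cases "p (Inr b)") auto
      then have "?E $ Inr b $ p (Inr b) = 0" by simp
      then have "(\<Prod>i\<in>UNIV. ?E $ i $ p i) = 0" by (intro prod_zero) auto
      then show "?f p = 0" by simp
    qed
  qed (auto intro: finite_permutations)
  also have "?G = ?split ` ?P"
    by (auto elim!: permutes_sum_split intro: map_sum_permutes)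
  also have "sum ?f (?split ` ?P) = sum (?f \<circ> ?split) ?P"
    by (rule sum.reindex) (auto simp: inj_on_def fun_eq_iff map_sum_def split: sum.split)
  also have "\<dots> = (\<Sum>(p1, p2)\<in>?P. (of_int (sign p1) * (\<Prod>a\<in>UNIV. A $ a $ p1 a))
                                 * (of_int (sign p2) * (\<Prod>b\<in>UNIV. D $ b $ p2 b)))"
    by (rule sum.cong) (auto simp: sign_map_sum prod_UNIV_sum_type)
  also have "\<dots> = det A * det D"
    unfolding det_def sum_product sum.cartesian_product by (simp add: case_prod_unfold)
  finally show ?thesis .
qed

lemma det_block_lower_triangular:
  fixes A :: "'a::comm_ring_1^'m::finite^'m" and D :: "'a^'n::finite^'n"
  shows "det (block_matrix A 0 C D) = det A * det D"
  by (metis det_block_upper_triangular det_transpose transpose_block_matrix transpose_zero)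

lemma det_id_plus_mult_commute:
  fixes X :: "'a::comm_ring_1^'n::finite^'m::finite" and Y :: "'a^'m^'n"
  shows "det (mat 1 + X ** Y) = det (mat 1 + Y ** X)"
proof -
  let ?E = "block_matrix (mat 1) X (- Y) (mat 1)"
  have "?E = block_matrix (mat 1 + X ** Y) X 0 (mat 1) ** block_matrix (mat 1) 0 (- Y) (mat 1)"
    unfolding block_matrix_mult by (simp add: matrix_add_rdistrib)
  then have "det ?E = det (mat 1 + X ** Y)"
    by (simp add: det_mul det_block_upper_triangular det_block_lower_triangular)
  moreover have "?E = block_matrix (mat 1) 0 (- Y) (mat 1) ** block_matrix (mat 1) X 0 (mat 1 + Y ** X)"
    unfolding block_matrix_mult by (simp add: matrix_add_ldistrib)
  then have "det ?E = det (mat 1 + Y ** X)"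
    by (simp add: det_mul det_block_upper_triangular det_block_lower_triangular)
  ultimately show ?thesis by simp
qed

section \<open>The spectral theorem for real symmetric matrices\<close>

lemma linear_coeff_eq_0_if_quadratic_nonpos:
  fixes a b :: real
  assumes "\<And>t. 2 * a * t + b * t\<^sup>2 \<le> 0"
  shows "a = 0"
proof (rule ccontr)
  assume a: "a \<noteq> 0"
  define c where "c = \<bar>b\<bar> + 1"
  have c: "c > 0" "c + b \<ge> 1" unfolding c_def by auto
  have "2 * a * (a/c) + b * (a/c)\<^sup>2 = a\<^sup>2 * (2 * c + b) / c\<^sup>2"
    using c by (simp add: field_simps power2_eq_square)
  moreover have "a\<^sup>2 * (2 * c + b) / c\<^sup>2 > 0" using a c
    by (intro divide_pos_pos mult_pos_pos) auto
  ultimately show False using assms[of "a/c"] by linarith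
qed

text \<open>A maximiser of the Rayleigh quotient on the unit sphere of an invariant subspace is an
  eigenvector: perturbing it within the subspace cannot increase the quotient.\<close>

lemma rayleigh_maximiser_eigenvector:
  fixes X :: "real^'n^'n"
  assumes sym: "transpose X = X" and S: "subspace S" "\<forall>x\<in>S. X *v x \<in> S"
    and v: "v \<in> S" "v \<bullet> v = 1" and max: "\<And>y. y \<in> S \<Longrightarrow> y \<bullet> (X *v y) \<le> (v \<bullet> (X *v v)) * (y \<bullet> y)"
  shows "X *v v = (v \<bullet> (X *v v)) *\<^sub>R v"
proof -
  define lam where "lam = v \<bullet> (X *v v)"
  have orth: "z \<bullet> (X *v v) = 0" if z: "z \<in> S" "z \<bullet> v = 0" for z
  proof (rule linear_coeff_eq_0_if_quadratic_nonpos[where b = "z \<bullet> (X *v z) - lam * (z \<bullet> z)"])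
    fix t :: real
    have "v + t *\<^sub>R z \<in> S" using v(1) z S(1) by (simp add: subspace_add subspace_mul)
    then have "(v + t *\<^sub>R z) \<bullet> (X *v (v + t *\<^sub>R z)) \<le> lam * ((v + t *\<^sub>R z) \<bullet> (v + t *\<^sub>R z))"
      unfolding lam_def by (rule max)
    moreover have "(v + t *\<^sub>R z) \<bullet> (X *v (v + t *\<^sub>R z)) = lam + 2 * t * (z \<bullet> (X *v v)) + t\<^sup>2 * (z \<bullet> (X *v z))"
      using inner_matrix_sym[OF sym, of v z] unfolding lam_def
      by (simp add: matrix_vector_right_distrib matrix_vector_mult_scaleR inner_add_left
          inner_add_right inner_commute power2_eq_square algebra_simps)
    moreover have "(v + t *\<^sub>R z) \<bullet> (v + t *\<^sub>R z) = 1 + t\<^sup>2 * (z \<bullet> z)"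
      using v(2) z(2) by (simp add: inner_add_left inner_add_right inner_commute power2_eq_square)
    ultimately have "lam + 2 * t * (z \<bullet> (X *v v)) + t\<^sup>2 * (z \<bullet> (X *v z)) \<le> lam * (1 + t\<^sup>2 * (z \<bullet> z))"
      by simp
    then show "2 * (z \<bullet> (X *v v)) * t + (z \<bullet> (X *v z) - lam * (z \<bullet> z)) * t\<^sup>2 \<le> 0"
      by (simp add: algebra_simps)
  qed
  define w where "w = X *v v - lam *\<^sub>R v"
  have wS: "w \<in> S" unfolding w_def using S v(1) by (simp add: subspace_diff subspace_mul)
  have wv: "w \<bullet> v = 0" unfolding w_def lam_def using v(2)
    by (simp add: inner_diff_left inner_diff_right inner_commute)
  have "w \<bullet> w = 0" using orth[OF wS wv] wv unfolding w_def
    by (simp add: inner_diff_left inner_diff_right)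
  then show ?thesis unfolding w_def lam_def by simp
qed

lemma symmetric_invariant_subspace_eigenvector:
  fixes X :: "real^'n^'n"
  assumes sym: "transpose X = X" and S: "subspace S" "S \<noteq> {0}" "\<forall>x\<in>S. X *v x \<in> S"
  obtains v where "v \<in> S" "norm v = 1" "X *v v = (v \<bullet> (X *v v)) *\<^sub>R v"
proof -
  define q where "q = (\<lambda>x::real^'n. x \<bullet> (X *v x))"
  define K where "K = S \<inter> sphere 0 1"
  obtain u where u: "u \<in> S" "u \<noteq> 0" using S(1,2) subspace_0 by blast
  have "compact K" unfolding K_def
    by (metis closed_subspace[OF S(1)] compact_Int_closed compact_sphere inf_commute)
  moreover have "u /\<^sub>R norm u \<in> K" unfolding K_def using u S(1) by (simp add: subspace_mul)
  then have "K \<noteq> {}" by blast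
  moreover have "continuous_on K q" unfolding q_def by (intro continuous_intros)
  ultimately obtain v where v: "v \<in> K" "\<And>y. y \<in> K \<Longrightarrow> q y \<le> q v"
    using continuous_attains_sup by metis
  have vS: "v \<in> S" and nv: "norm v = 1" using v(1) unfolding K_def by auto
  have "q y \<le> q v * (y \<bullet> y)" if "y \<in> S" for y
  proof (cases "y = 0")
    case False
    have "y /\<^sub>R norm y \<in> K" unfolding K_def using that False S(1) by (simp add: subspace_mul)
    then have "q (y /\<^sub>R norm y) \<le> q v" using v(2) by blast
    then have "q y / (norm y)\<^sup>2 \<le> q v"
      by (simp add: q_def matrix_vector_mult_scaleR field_simps power2_eq_square)
    then show ?thesis using False by (simp add: field_simps power2_norm_eq_inner)
  qed (simp add: q_def)
  then have "X *v v = (v \<bullet> (X *v v)) *\<^sub>R v"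
    using rayleigh_maximiser_eigenvector[OF sym S(1,3) vS] nv by (simp add: q_def norm_eq_1)
  then show ?thesis using that vS nv by blast
qed

lemma symmetric_invariant_subspace_eigenbasis:
  fixes X :: "real^'n^'n"
  assumes sym: "transpose X = X"
  shows "subspace S \<Longrightarrow> dim S = d \<Longrightarrow> \<forall>x\<in>S. X *v x \<in> S \<Longrightarrow>
    \<exists>B. B \<subseteq> S \<and> pairwise orthogonal B \<and> card B = d \<and>
        (\<forall>b\<in>B. norm b = 1 \<and> X *v b = (b \<bullet> (X *v b)) *\<^sub>R b)"
proof (induction d arbitrary: S)
  case 0
  then show ?case by (intro exI[of _ "{}"]) auto
next
  case (Suc k)
  have "S \<noteq> {0}" using Suc.prems(2) by auto
  then obtain v where v: "v \<in> S" "norm v = 1" "X *v v = (v \<bullet> (X *v v)) *\<^sub>R v"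
    using symmetric_invariant_subspace_eigenvector[OF sym Suc.prems(1) _ Suc.prems(3)] by blast
  define S' where "S' = {y \<in> S. orthogonal v y}"
  have "S' = S \<inter> {y. orthogonal v y}" unfolding S'_def by blast
  then have "subspace S'" using subspace_inter[OF Suc.prems(1) subspace_orthogonal_to_vector] by simp
  moreover have "dim S' = k"
  proof -
    have "S' = {y \<in> S. \<forall>x \<in> span {v}. orthogonal x y}"
      unfolding S'_def span_singleton by (auto simp: orthogonal_def)
    moreover have "span {v} \<subseteq> S" using v(1) Suc.prems(1) by (simp add: span_minimal)
    ultimately have "dim S' + dim (span {v}) = dim S"
      using dim_subspace_orthogonal_to_vectors[OF _ Suc.prems(1), of "span {v}"] by simp
    moreover have "dim (span {v}) = 1" using v(2) by (metis dim_span dim_singleton norm_zero zero_neq_one)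
    ultimately show ?thesis using Suc.prems(2) by simp
  qed
  moreover have "\<forall>x\<in>S'. X *v x \<in> S'"
  proof
    fix x assume x: "x \<in> S'"
    have "v \<bullet> (X *v x) = (X *v v) \<bullet> x" by (rule inner_matrix_sym[OF sym])
    also have "\<dots> = (v \<bullet> (X *v v)) * (v \<bullet> x)" by (subst v(3)) simp
    also have "\<dots> = 0" using x unfolding S'_def by (simp add: orthogonal_def)
    finally show "X *v x \<in> S'" using x Suc.prems(3) unfolding S'_def by (simp add: orthogonal_def)
  qed
  ultimately obtain B where B: "B \<subseteq> S'" "pairwise orthogonal B" "card B = k"
    "\<forall>b\<in>B. norm b = 1 \<and> X *v b = (b \<bullet> (X *v b)) *\<^sub>R b"
    using Suc.IH by blast
  have "v \<notin> B" using B(1) v(2) unfolding S'_def orthogonal_def by (auto simp: norm_eq_1)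
  moreover have "finite B"
    using B(2,4) pairwise_orthogonal_independent independent_imp_finite by fastforce
  ultimately show ?case using v B unfolding S'_def
    by (intro exI[of _ "insert v B"]) (auto simp: pairwise_insert orthogonal_commute)
qed

theorem symmetric_matrix_eigenbasis:
  fixes X :: "real^'n^'n"
  assumes sym: "transpose X = X"
  obtains V :: "real^'n^'n" and \<mu> :: "'n \<Rightarrow> real"
  where "orthogonal_matrix V" "\<And>j. X *v column j V = \<mu> j *\<^sub>R column j V"
proof -
  obtain B where B: "pairwise orthogonal B" "card B = CARD('n)"
      "\<forall>b\<in>B. norm b = 1 \<and> X *v b = (b \<bullet> (X *v b)) *\<^sub>R b"
    using symmetric_invariant_subspace_eigenbasis[OF sym, of UNIV "CARD('n)"]
    by (auto simp: DIM_cart)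
  then have "finite B" by (metis card_ge_0_finite zero_less_card_finite)
  moreover have "\<exists>h. bij_betw h (UNIV::'n set) B"
    by (rule finite_same_card_bij) (use calculation B(2) in auto)
  ultimately obtain f where f: "bij_betw f (UNIV::'n set) B" by blast
  define V :: "real^'n^'n" where "V = (\<chi> i j. f j $ i)"
  have col: "column j V = f j" for j
    unfolding V_def column_def by (simp add: vec_eq_iff)
  have fB: "f j \<in> B" and f_inj: "f i = f j \<longleftrightarrow> i = j" for i j
    using f by (auto simp: bij_betw_def inj_on_def)
  have "orthogonal_matrix V"
    unfolding orthogonal_matrix_orthonormal_columns col
    using B(1,3) fB f_inj by (metis pairwise_def)
  moreover have "X *v column j V = (f j \<bullet> (X *v f j)) *\<^sub>R column j V" for j
    unfolding col using B(3) fB by auto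
  ultimately show ?thesis by (rule that)
qed

lemma orthogonal_matrix_columns_inner:
  fixes V :: "real^'n^'n"
  assumes "orthogonal_matrix V"
  shows "column i V \<bullet> column j V = (if i = j then 1 else 0)"
  using assms unfolding orthogonal_matrix_orthonormal_columns by (auto simp: orthogonal_def norm_eq_1)

lemma eigenbasis_det_trace:
  fixes X :: "real^'n^'n"
  assumes V: "orthogonal_matrix V" and eig: "\<And>j. X *v column j V = \<mu> j *\<^sub>R column j V"
  shows "det X = (\<Prod>j\<in>UNIV. \<mu> j)" "trace X = (\<Sum>j\<in>UNIV. \<mu> j)"
    "\<mu> j = column j V \<bullet> (X *v column j V)"
proof -
  define D where "D = transpose V ** X ** V"
  have D: "D $ i $ j = (if i = j then \<mu> j else 0)" for i j
    unfolding D_def transpose_sandwich_entry eig using orthogonal_matrix_columns_inner[OF V] by simp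
  have "det D = det X * (det V * det V)" unfolding D_def by (simp add: det_mul)
  moreover have "det V * det V = 1" using det_orthogonal_matrix[OF V] by auto
  ultimately have "det X = det D" by simp
  also have "\<dots> = (\<Prod>j\<in>UNIV. \<mu> j)" by (subst det_diagonal) (auto simp: D)
  finally show "det X = (\<Prod>j\<in>UNIV. \<mu> j)" .
  have "trace D = trace ((V ** transpose V) ** X)"
    unfolding D_def by (metis matrix_mul_assoc trace_mul_sym)
  then show "trace X = (\<Sum>j\<in>UNIV. \<mu> j)"
    using V by (simp add: orthogonal_matrix_def trace_def D)
  show "\<mu> j = column j V \<bullet> (X *v column j V)"
    using orthogonal_matrix_columns_inner[OF V, of j j] eig[of j] by simp
qed

lemma psd_symmetric: "psd Q \<Longrightarrow> transpose Q = Q"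
  and psd_quadratic_nonneg: "psd Q \<Longrightarrow> 0 \<le> x \<bullet> (Q *v x)"
  by (simp_all add: psd_def)

lemma psd_add: "psd A \<Longrightarrow> psd B \<Longrightarrow> psd (A + B)"
  by (simp add: psd_def matrix_vector_mult_add_rdistrib inner_add_right transpose_add)

lemma psd_scaleR: "0 \<le> c \<Longrightarrow> psd A \<Longrightarrow> psd (c *\<^sub>R A)"
  by (simp add: psd_def matrix_vector_mult_scaleR_left transpose_scalar)

lemma psd_id: "psd (mat 1)"
  by (simp add: psd_def)

lemma psd_sandwich:
  assumes "psd B"
  shows "psd (A ** B ** transpose A)"
  unfolding psd_def
proof
  show "transpose (A ** B ** transpose A) = A ** B ** transpose A"
    using psd_symmetric[OF assms] by (simp add: matrix_transpose_mul matrix_mul_assoc)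
  show "\<forall>x. 0 \<le> x \<bullet> ((A ** B ** transpose A) *v x)"
    using psd_quadratic_nonneg[OF assms] by (simp add: inner_matrix_sandwich)
qed

lemma psd_gram: "psd (A ** transpose A)"
  using psd_sandwich[OF psd_id, of A] by simp

lemma prod_le_mean_power:
  fixes y :: "'n::finite \<Rightarrow> real"
  assumes "\<And>j. 0 \<le> y j"
  shows "(\<Prod>j\<in>UNIV. y j) \<le> ((\<Sum>j\<in>UNIV. y j) / CARD('n)) ^ CARD('n)"
proof -
  have p0: "0 \<le> (\<Prod>j\<in>UNIV. y j)" using assms by (simp add: prod_nonneg)
  have "(\<Prod>j\<in>UNIV. y j) powr (1 / CARD('n)) \<le> (\<Sum>j\<in>UNIV. y j / CARD('n))"
    using arith_geom_mean[of "UNIV::'n set" y] assms by simp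
  also have "\<dots> = (\<Sum>j\<in>UNIV. y j) / CARD('n)" by (simp add: sum_divide_distrib)
  finally have "((\<Prod>j\<in>UNIV. y j) powr (1 / CARD('n))) ^ CARD('n) \<le> ((\<Sum>j\<in>UNIV. y j) / CARD('n)) ^ CARD('n)"
    by (rule power_mono) simp
  moreover have "((\<Prod>j\<in>UNIV. y j) powr (1 / CARD('n))) ^ CARD('n) = (\<Prod>j\<in>UNIV. y j)"
  proof (cases "(\<Prod>j\<in>UNIV. y j) = 0")
    case True then show ?thesis by (simp only: True) simp
  qed (use p0 in \<open>simp add: powr_power\<close>)
  ultimately show ?thesis by simp
qed

lemma
  fixes X :: "real^'n^'n"
  assumes "psd X"
  shows psd_det_nonneg: "0 \<le> det X"
    and psd_trace_nonneg: "0 \<le> trace X"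
    and psd_det_le_trace_power: "det X \<le> (trace X / CARD('n)) ^ CARD('n)"
    and det_id_plus_psd_ge_1: "1 \<le> det (mat 1 + X)"
    and det_le_det_id_plus_psd: "det X \<le> det (mat 1 + X)"
proof -
  obtain V \<mu> where V: "orthogonal_matrix V" and eig: "\<And>j. X *v column j V = \<mu> j *\<^sub>R column j V"
    using symmetric_matrix_eigenbasis[OF psd_symmetric[OF assms]] by blast
  have eig1: "(mat 1 + X) *v column j V = (1 + \<mu> j) *\<^sub>R column j V" for j
    by (simp add: matrix_vector_mult_add_rdistrib eig scaleR_add_left)
  have \<mu>0: "0 \<le> \<mu> j" for j
    using eigenbasis_det_trace(3)[OF V eig] psd_quadratic_nonneg[OF assms] by simp
  note \<mu> = eigenbasis_det_trace(1,2)[OF V eig] eigenbasis_det_trace(1)[OF V eig1]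
  show "0 \<le> det X" unfolding \<mu>(1) by (rule prod_nonneg) (use \<mu>0 in auto)
  show "0 \<le> trace X" unfolding \<mu>(2) by (rule sum_nonneg) (use \<mu>0 in auto)
  show "det X \<le> (trace X / CARD('n)) ^ CARD('n)" unfolding \<mu>(1,2) by (rule prod_le_mean_power[OF \<mu>0])
  show "1 \<le> det (mat 1 + X)" unfolding \<mu>(3) by (rule prod_ge_1) (use \<mu>0 in auto)
  show "det X \<le> det (mat 1 + X)" unfolding \<mu>(1,3) by (rule prod_mono) (use \<mu>0 in auto)
qed

text \<open>\<open>tr Q - tr (U Q U\<^sup>T) = tr (W Q W)\<close> for the orthogonal projection \<open>W = I - U\<^sup>T U\<close>.\<close>

lemma trace_compression_le:
  fixes U :: "real^'m^'n"
  assumes U: "U ** transpose U = mat 1" and Q: "psd Q"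
  shows "trace (U ** Q ** transpose U) \<le> trace Q"
proof -
  define W where "W = mat 1 - transpose U ** U"
  have "(transpose U ** U) ** (transpose U ** U) = transpose U ** U"
    by (metis U matrix_mul_assoc matrix_mul_lid)
  then have WW: "W ** W = W" unfolding W_def by (simp add: matrix_diff_ldistrib matrix_diff_rdistrib)
  have Wt: "transpose W = W" unfolding W_def by (simp add: matrix_transpose_mul transpose_diff)
  have "trace (U ** Q ** transpose U) = trace (Q ** (transpose U ** U))"
    by (metis matrix_mul_assoc trace_mul_sym)
  moreover have "trace Q - trace (Q ** (transpose U ** U)) = trace (W ** Q ** transpose W)"
  proof -
    have "trace Q - trace (Q ** (transpose U ** U)) = trace (Q ** W)"
      unfolding W_def by (simp add: matrix_diff_ldistrib trace_sub)
    also have "\<dots> = trace ((Q ** W) ** W)" by (simp add: WW flip: matrix_mul_assoc)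
    also have "\<dots> = trace (W ** (Q ** W))" by (rule trace_mul_sym)
    finally show ?thesis by (simp add: Wt matrix_mul_assoc)
  qed
  moreover have "0 \<le> trace (W ** Q ** transpose W)" by (rule psd_trace_nonneg[OF psd_sandwich[OF Q]])
  ultimately show ?thesis by simp
qed

section \<open>Rank-one updates and successive decoding\<close>

lemma det_id_plus_rank_one: "det (mat 1 + columnvector u ** (rowvector w :: real^'n^1)) = 1 + w \<bullet> u"
proof -
  have "det (mat 1 + columnvector u ** (rowvector w :: real^'n^1)) = det (mat 1 + rowvector w ** columnvector u :: real^1^1)"
    by (rule det_id_plus_mult_commute)
  also have "\<dots> = 1 + w \<bullet> u"
    by (simp add: det_1 mat_def matrix_matrix_mult_def columnvector_def rowvector_def inner_vec_def)
  finally show ?thesis .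
qed

lemma matrix_determinant_lemma:
  fixes Y :: "real^'n^'n"
  assumes inv: "invertible Y"
  shows "det (Y + c *\<^sub>R outer g) = det Y * (1 + c * (g \<bullet> (matrix_inv Y *v g)))"
proof -
  have "columnvector (c *\<^sub>R (matrix_inv Y *v g)) ** (rowvector g :: real^'n^1) = c *\<^sub>R (matrix_inv Y ** outer g)"
    by (simp add: columnvector_def rowvector_def outer_def matrix_matrix_mult_def matrix_vector_mult_def
        vec_eq_iff sum_distrib_left sum_distrib_right mult.assoc mult.left_commute)
  then have "Y ** (mat 1 + columnvector (c *\<^sub>R (matrix_inv Y *v g)) ** (rowvector g :: real^'n^1)) =
      Y + c *\<^sub>R ((Y ** matrix_inv Y) ** outer g)"
    by (simp add: matrix_add_ldistrib matrix_mul_assoc matrix_mult_scaleR_right)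
  then have "Y + c *\<^sub>R outer g = Y ** (mat 1 + columnvector (c *\<^sub>R (matrix_inv Y *v g)) ** (rowvector g :: real^'n^1))"
    by (simp add: matrix_inv_right[OF inv])
  then show ?thesis by (simp add: det_mul det_id_plus_rank_one)
qed

definition id_le :: "real^'n^'n \<Rightarrow> bool" where
  "id_le Y \<longleftrightarrow> transpose Y = Y \<and> (\<forall>x. x \<bullet> x \<le> x \<bullet> (Y *v x))"

lemma id_le_invertible:
  assumes "id_le Y"
  shows "invertible Y"
proof (rule invertible_if_inj, rule injI)
  fix x y assume "Y *v x = Y *v y"
  then have "Y *v (x - y) = 0" by (simp add: matrix_vector_mult_diff_distrib)
  then have "(x - y) \<bullet> (x - y) \<le> 0" using assms unfolding id_le_def by (metis inner_zero_right)
  then have "(x - y) \<bullet> (x - y) = 0" using inner_ge_zero[of "x - y"] by linarith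
  then show "x = y" by simp
qed

text \<open>For \<open>Y \<succeq> I\<close>, the quadratic form of \<open>Y\<^sup>-\<^sup>1\<close> is the maximum of \<open>2 g\<^sup>T y - y\<^sup>T Y y\<close>,
  attained at \<open>y = Y\<^sup>-\<^sup>1 g\<close>; the inequalities on \<open>g\<^sup>T Y\<^sup>-\<^sup>1 g\<close> below all follow from this.\<close>

lemma inverse_form_ge:
  assumes Y: "id_le Y"
  shows "2 * (g \<bullet> y) - y \<bullet> (Y *v y) \<le> g \<bullet> (matrix_inv Y *v g)"
proof -
  define u where "u = matrix_inv Y *v g"
  have Yu: "Y *v u = g" unfolding u_def by (rule matrix_inv_mult_cancel[OF id_le_invertible[OF Y]])
  have sym: "transpose Y = Y" using Y by (simp add: id_le_def)
  have "0 \<le> (y - u) \<bullet> (y - u)" by simp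
  also have "\<dots> \<le> (y - u) \<bullet> (Y *v (y - u))" using Y by (simp add: id_le_def)
  also have "\<dots> = y \<bullet> (Y *v y) - 2 * (g \<bullet> y) + g \<bullet> u"
    using inner_matrix_sym[OF sym, of u y] Yu
    by (simp add: matrix_vector_mult_diff_distrib inner_diff_left inner_diff_right inner_commute)
  finally show ?thesis unfolding u_def by simp
qed

lemma inverse_form_antimono:
  assumes Y: "id_le Y" and Z: "id_le Z" and le: "\<And>x. x \<bullet> (Y *v x) \<le> x \<bullet> (Z *v x)"
  shows "g \<bullet> (matrix_inv Z *v g) \<le> g \<bullet> (matrix_inv Y *v g)"
proof -
  define y where "y = matrix_inv Z *v g"
  have "g \<bullet> (matrix_inv Z *v g) = 2 * (g \<bullet> y) - y \<bullet> (Z *v y)"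
    using matrix_inv_mult_cancel[OF id_le_invertible[OF Z]] by (simp add: y_def inner_commute)
  also have "\<dots> \<le> 2 * (g \<bullet> y) - y \<bullet> (Y *v y)" using le[of y] by simp
  also have "\<dots> \<le> g \<bullet> (matrix_inv Y *v g)" by (rule inverse_form_ge[OF Y])
  finally show ?thesis .
qed

lemma inverse_form_nonneg: "id_le Y \<Longrightarrow> 0 \<le> g \<bullet> (matrix_inv Y *v g)"
  using inverse_form_ge[of Y g 0] by simp

lemma inverse_form_le_inner:
  assumes Y: "id_le Y"
  shows "g \<bullet> (matrix_inv Y *v g) \<le> g \<bullet> g"
proof -
  have I: "id_le (mat 1 :: real^'n^'n)" by (simp add: id_le_def)
  have "g \<bullet> (matrix_inv Y *v g) \<le> g \<bullet> (matrix_inv (mat 1) *v g)"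
    by (rule inverse_form_antimono[OF I Y]) (use Y in \<open>simp add: id_le_def\<close>)
  also have "matrix_inv (mat 1 :: real^'n^'n) = mat 1"
    using matrix_inv_right[OF id_le_invertible[OF I]] by simp
  finally show ?thesis by simp
qed

definition id_plus_outer :: "real \<Rightarrow> ('j \<Rightarrow> real^'n) \<Rightarrow> 'j set \<Rightarrow> real^'n^'n" where
  "id_plus_outer t g J = mat 1 + t *\<^sub>R (\<Sum>j\<in>J. outer (g j))"

lemma id_plus_outer_quadratic:
  "x \<bullet> (id_plus_outer t g J *v x) = x \<bullet> x + t * (\<Sum>j\<in>J. (g j \<bullet> x)\<^sup>2)"
  by (simp add: id_plus_outer_def matrix_vector_mult_add_rdistrib matrix_vector_mult_scaleR_left
      matrix_vector_mult_sum_left outer_mult_vector inner_add_right inner_sum_right power2_eq_square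
      inner_commute)

lemma transpose_id_plus_outer: "transpose (id_plus_outer t g J) = id_plus_outer t g J"
  by (simp add: id_plus_outer_def transpose_def vec_eq_iff outer_def mat_def mult.commute)

lemma id_le_id_plus_outer: "0 \<le> t \<Longrightarrow> id_le (id_plus_outer t g J)"
  by (simp add: id_le_def id_plus_outer_quadratic sum_nonneg transpose_id_plus_outer)

lemma det_id_plus_outer_insert:
  assumes "finite J" "n \<notin> J" "0 \<le> t"
  shows "det (id_plus_outer t g (insert n J)) =
    det (id_plus_outer t g J) * (1 + t * (g n \<bullet> (matrix_inv (id_plus_outer t g J) *v g n)))"
proof -
  have "id_plus_outer t g (insert n J) = id_plus_outer t g J + t *\<^sub>R outer (g n)"
    using assms(1,2) by (simp add: id_plus_outer_def scaleR_add_right add.commute add.left_commute)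
  then show ?thesis using matrix_determinant_lemma[OF id_le_invertible[OF id_le_id_plus_outer[OF assms(3)]]] by simp
qed

lemma inverse_form_id_plus_outer_antimono:
  assumes "J \<subseteq> K" "finite K" "0 \<le> t"
  shows "h \<bullet> (matrix_inv (id_plus_outer t g K) *v h) \<le> h \<bullet> (matrix_inv (id_plus_outer t g J) *v h)"
proof (rule inverse_form_antimono[OF id_le_id_plus_outer id_le_id_plus_outer])
  show "x \<bullet> (id_plus_outer t g J *v x) \<le> x \<bullet> (id_plus_outer t g K *v x)" for x
    using assms by (auto simp: id_plus_outer_quadratic intro!: mult_left_mono sum_mono2)
qed (use assms in auto)

text \<open>\<open>log\<^sub>2 (1 + t \<cdot> sic_gain t g n)\<close> is the rate of the \<open>n\<close>-th stream when the streams are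
  decoded successively in increasing order; by the matrix determinant lemma these rates telescope to the
  log-determinant of the whole channel.\<close>

definition sic_gain :: "real \<Rightarrow> ('j::{finite,linorder} \<Rightarrow> real^'n) \<Rightarrow> 'j \<Rightarrow> real" where
  "sic_gain t g n = g n \<bullet> (matrix_inv (id_plus_outer t g {j. j < n}) *v g n)"

lemma sic_gain_nonneg: "0 \<le> t \<Longrightarrow> 0 \<le> sic_gain t g n"
  unfolding sic_gain_def by (rule inverse_form_nonneg[OF id_le_id_plus_outer])

lemma sic_gain_le: "0 \<le> t \<Longrightarrow> sic_gain t g n \<le> g n \<bullet> g n"
  unfolding sic_gain_def by (rule inverse_form_le_inner[OF id_le_id_plus_outer])

lemma sic_gain_ge:
  assumes t: "0 \<le> t" and orth: "\<And>j. j \<noteq> n \<Longrightarrow> g j \<bullet> y = 0" and gy: "g n \<bullet> y = y \<bullet> y"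
  shows "y \<bullet> y \<le> sic_gain t g n"
proof -
  have "id_plus_outer t g {j. j < n} *v y = y"
    using orth by (simp add: id_plus_outer_def matrix_vector_mult_add_rdistrib matrix_vector_mult_scaleR_left
        matrix_vector_mult_sum_left outer_mult_vector)
  then show ?thesis
    using inverse_form_ge[OF id_le_id_plus_outer[OF t, of g "{j. j < n}"], of "g n" y] gy
    by (simp add: sic_gain_def)
qed

lemma prod_sic_gain_le_det:
  fixes g :: "'j::{finite,linorder} \<Rightarrow> real^'n"
  assumes t: "0 \<le> t"
  shows "(\<Prod>n\<in>J. 1 + t * sic_gain t g n) \<le> det (id_plus_outer t g J)"
proof -
  have "finite J" by simp
  then show ?thesis
  proof (induct J rule: finite_linorder_max_induct)
    case empty then show ?case by (simp add: id_plus_outer_def)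
  next
    case (insert n J)
    let ?q = "g n \<bullet> (matrix_inv (id_plus_outer t g J) *v g n)"
    have nJ: "n \<notin> J" using insert(2) by auto
    have "sic_gain t g n \<le> ?q"
      unfolding sic_gain_def by (rule inverse_form_id_plus_outer_antimono) (use insert(2) t in auto)
    then have "1 + t * sic_gain t g n \<le> 1 + t * ?q" using t by (simp add: mult_left_mono)
    moreover have "0 \<le> (\<Prod>n\<in>J. 1 + t * sic_gain t g n)"
      by (intro prod_nonneg) (simp add: t sic_gain_nonneg)
    moreover have "0 \<le> 1 + t * ?q"
      using t inverse_form_nonneg[OF id_le_id_plus_outer[OF t, of g J], of "g n"] by simp
    ultimately have "(1 + t * sic_gain t g n) * (\<Prod>n\<in>J. 1 + t * sic_gain t g n) \<le> (1 + t * ?q) * det (id_plus_outer t g J)"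
      using insert(3) by (intro mult_mono) auto
    then show ?case
      using insert(1) nJ det_id_plus_outer_insert[OF insert(1) nJ t, of g] by (simp add: mult.commute)
  qed
qed

lemma prod_sic_gain_eq_det:
  fixes g :: "'j::{finite,linorder} \<Rightarrow> real^'n"
  assumes t: "0 \<le> t"
  shows "(\<Prod>n\<in>UNIV. 1 + t * sic_gain t g n) = det (id_plus_outer t g UNIV)"
proof -
  have "finite J \<Longrightarrow> (\<forall>n\<in>J. \<forall>j<n. j \<in> J) \<Longrightarrow>
    (\<Prod>n\<in>J. 1 + t * sic_gain t g n) = det (id_plus_outer t g J)" for J :: "'j set"
  proof (induct J rule: finite_linorder_max_induct)
    case empty then show ?case by (simp add: id_plus_outer_def)
  next
    case (insert n J)
    have nJ: "n \<notin> J" using insert(2) by auto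
    have J: "J = {j. j < n}" using insert(2,4) by auto
    then have "\<forall>m\<in>J. \<forall>j<m. j \<in> J" by auto
    then show ?case
      using insert(1,3) nJ det_id_plus_outer_insert[OF insert(1) nJ t, of g] J
      by (simp add: sic_gain_def mult.commute)
  qed
  then show ?thesis by simp
qed

lemma log_prod: "finite I \<Longrightarrow> (\<And>i. i \<in> I \<Longrightarrow> f i \<noteq> 0) \<Longrightarrow> log b (prod f I) = (\<Sum>i\<in>I. log b (f i))"
  by (simp add: log_def ln_prod sum_divide_distrib)

lemma log2_mult_power:
  "0 < K \<Longrightarrow> 0 < x \<Longrightarrow> log 2 (K * x ^ n) = log 2 K + real n * log 2 x"
  by (simp add: log_mult_pos log_nat_power)

lemma log2_le_mult_power:
  assumes "1 \<le> D" "D \<le> K * x ^ n" "0 < K" "0 < x"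
  shows "log 2 D \<le> real n * log 2 x + log 2 K"
  using log_mono[of 2 D "K * x ^ n"] assms by (simp add: log2_mult_power)

lemma log2_ge_mult_power:
  assumes "K * x ^ n \<le> D" "0 < K" "0 < x"
  shows "real n * log 2 x + log 2 K \<le> log 2 D"
  using log_mono[of 2 "K * x ^ n" D] assms by (simp add: log2_mult_power)

lemma log2_det_id_plus_sandwich_nonneg:
  assumes "psd Q" "0 < s"
  shows "0 \<le> log 2 (det (mat 1 + (1 / s) *\<^sub>R (A ** Q ** transpose A)))"
proof -
  have "1 \<le> det (mat 1 + (1 / s) *\<^sub>R (A ** Q ** transpose A))"
    using assms by (intro det_id_plus_psd_ge_1 psd_scaleR psd_sandwich) auto
  then show ?thesis by simp
qed

lemma det_id_plus_scaleR_psd_ge: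
  fixes M :: "real^'n^'n"
  assumes "psd M" "0 \<le> c"
  shows "c ^ CARD('n) * det M \<le> det (mat 1 + c *\<^sub>R M)"
  using det_le_det_id_plus_psd[OF psd_scaleR[OF assms(2,1)]] by (simp add: det_scaleR)

lemma det_upper_tri:
  fixes A :: "real^('n::{finite,linorder})^('n::{finite,linorder})"
  assumes "upper_tri A"
  shows "det A = (\<Prod>i\<in>UNIV. A$i$i)"
proof -
  have "of_int (sign p) * (\<Prod>i\<in>UNIV. A$i$p i) = 0" if p: "p permutes UNIV" "p \<noteq> id" for p
  proof -
    have "\<exists>i. p i < i"
    proof (rule ccontr)
      assume "\<not> ?thesis"
      then have ge: "\<And>i. i \<le> p i" by (simp add: not_less)
      define m where "m = Max {i. p i \<noteq> i}"
      have "{i. p i \<noteq> i} \<noteq> {}" using p(2) by (auto simp: fun_eq_iff)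
      then have m: "p m \<noteq> m" "\<And>i. p i \<noteq> i \<Longrightarrow> i \<le> m" unfolding m_def
        using Max_in[of "{i. p i \<noteq> i}"] by auto
      then have "m < p m" using ge[of m] by (simp add: order_le_neq_trans)
      then have "p (p m) = p m" using m(2)[of "p m"] by force
      then show False using m(1) permutes_inj[OF p(1)] by (auto simp: inj_def)
    qed
    then obtain i where "p i < i" by blast
    then have "A$i$p i = 0" using assms unfolding upper_tri_def by blast
    then show ?thesis by (simp add: prod_zero_iff) blast
  qed
  then have "det A = (\<Sum>p\<in>{id}. of_int (sign p) * (\<Prod>i\<in>UNIV. A$i$p i))"
    unfolding det_def by (intro sum.mono_neutral_right) (auto simp: permutes_id)
  then show ?thesis by (simp add: sign_id)
qed

lemma id_plus_sandwich_RU: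
  fixes R :: "real^'n^'n" and U :: "real^'m^'n"
  assumes inv: "invertible R"
  shows "mat 1 + c *\<^sub>R ((R ** U) ** Q ** transpose (R ** U)) =
    R ** (matrix_inv R ** transpose (matrix_inv R) + c *\<^sub>R (U ** Q ** transpose U)) ** transpose R"
proof -
  let ?Ri = "matrix_inv R"
  have "R ** (?Ri ** transpose ?Ri) ** transpose R = (R ** ?Ri) ** transpose (R ** ?Ri)"
    by (simp add: matrix_mul_assoc matrix_transpose_mul)
  then have "R ** (?Ri ** transpose ?Ri) ** transpose R = mat 1" by (simp add: matrix_inv_right[OF inv])
  moreover have "R ** (c *\<^sub>R (U ** Q ** transpose U)) ** transpose R = c *\<^sub>R ((R ** U) ** Q ** transpose (R ** U))"
    by (simp add: matrix_mult_scaleR_left matrix_mult_scaleR_right matrix_transpose_mul matrix_mul_assoc)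
  ultimately show ?thesis by (simp add: matrix_add_ldistrib matrix_add_rdistrib)
qed

lemma log2_det_RU_le:
  fixes R :: "real^'n^'n" and U :: "real^'m^'n"
  assumes inv: "invertible R" and U: "U ** transpose U = mat 1" and Q: "psd Q"
    and T: "trace Q \<le> T" "0 < T" and s: "0 < s"
  shows "log 2 (det (mat 1 + (1 / s) *\<^sub>R ((R ** U) ** Q ** transpose (R ** U)))) \<le>
    CARD('n) * log 2 ((trace (matrix_inv R ** transpose (matrix_inv R)) + T / s) / CARD('n)) + log 2 ((det R)\<^sup>2)"
proof -
  let ?a = "trace (matrix_inv R ** transpose (matrix_inv R))"
  define X where "X = matrix_inv R ** transpose (matrix_inv R) + (1 / s) *\<^sub>R (U ** Q ** transpose U)"
  have psdX: "psd X" unfolding X_def using s by (intro psd_add psd_gram psd_scaleR psd_sandwich Q) simp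
  have a: "0 \<le> ?a" by (rule psd_trace_nonneg[OF psd_gram])
  have "trace X \<le> ?a + T / s"
    using trace_compression_le[OF U Q] T s by (simp add: X_def trace_add trace_scaleR divide_right_mono)
  then have "trace X / CARD('n) \<le> (?a + T / s) / CARD('n)" by (simp add: divide_right_mono)
  then have "det X \<le> ((?a + T / s) / CARD('n)) ^ CARD('n)"
    using psd_trace_nonneg[OF psdX] psd_det_le_trace_power[OF psdX] by (meson divide_nonneg_nonneg of_nat_0_le_iff order_trans power_mono)
  moreover have "0 < (det R)\<^sup>2" using inv by (simp add: invertible_det_nz)
  moreover have "det (mat 1 + (1 / s) *\<^sub>R ((R ** U) ** Q ** transpose (R ** U))) = (det R)\<^sup>2 * det X"
    unfolding id_plus_sandwich_RU[OF inv] X_def by (simp add: det_mul power2_eq_square)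
  moreover have "0 < (?a + T / s) / CARD('n)" using a T(2) s by (intro divide_pos_pos add_nonneg_pos) auto
  ultimately show ?thesis
    using log2_le_mult_power det_id_plus_psd_ge_1[OF psd_scaleR[OF _ psd_sandwich[OF Q]], of "1 / s" "R ** U"] s
    by (simp add: mult_left_mono)
qed

lemma log2_det_RU_ge:
  fixes R :: "real^'n^'n" and U :: "real^'m^'n"
  assumes inv: "invertible R" and U: "U ** transpose U = mat 1" and q: "0 < q" and s: "0 < s"
  shows "CARD('n) * log 2 (q / s) + log 2 ((det R)\<^sup>2) \<le>
    log 2 (det (mat 1 + (1 / s) *\<^sub>R ((R ** U) ** (q *\<^sub>R (transpose U ** U)) ** transpose (R ** U))))"
proof -
  have "(R ** U) ** (transpose U ** U) ** transpose (R ** U) = R ** (U ** transpose U) ** (U ** transpose U) ** transpose R"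
    by (simp add: matrix_transpose_mul matrix_mul_assoc)
  then have eq: "mat 1 + (1 / s) *\<^sub>R ((R ** U) ** (q *\<^sub>R (transpose U ** U)) ** transpose (R ** U)) =
      mat 1 + (q / s) *\<^sub>R (R ** transpose R)"
    using U by (simp add: matrix_mult_scaleR_left matrix_mult_scaleR_right)
  have "(det R)\<^sup>2 * (q / s) ^ CARD('n) \<le> det (mat 1 + (q / s) *\<^sub>R (R ** transpose R))"
    using det_id_plus_scaleR_psd_ge[OF psd_gram, of "q / s" R] q s by (simp add: det_mul power2_eq_square mult.commute)
  moreover have "0 < (det R)\<^sup>2" using inv by (simp add: invertible_det_nz)
  ultimately show ?thesis unfolding eq using q s by (intro log2_ge_mult_power) auto
qed

lemma inner_gram: "x \<bullet> ((transpose G ** G) *v x) = (G *v x) \<bullet> (G *v (x::real^'n))"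
proof -
  have "x \<bullet> ((transpose G ** G) *v x) = x \<bullet> (transpose G *v (G *v x))"
    by (simp add: matrix_vector_mul_assoc)
  also have "\<dots> = (x v* transpose G) \<bullet> (G *v x)" by (simp only: dot_lmul_matrix)
  finally show ?thesis by simp
qed

lemma gram_invertible:
  fixes G :: "real^'n^'m"
  assumes "rank G = CARD('n)"
  shows "invertible (transpose G ** G)"
proof (rule invertible_if_inj, rule injI)
  have injG: "inj ((*v) G)" using assms full_rank_injective by blast
  fix x y assume "(transpose G ** G) *v x = (transpose G ** G) *v y"
  then have "(transpose G ** G) *v (x - y) = 0" by (simp add: matrix_vector_mult_diff_distrib)
  then have "(G *v (x - y)) \<bullet> (G *v (x - y)) = 0" using inner_gram[of "x - y" G] by simp
  then have "G *v x = G *v y" by (simp add: matrix_vector_mult_diff_distrib)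
  then show "x = y" using injG by (simp add: inj_def)
qed

lemma
  fixes G :: "real^'n^'m"
  assumes "rank G = CARD('n)"
  shows psd_inverse_gram: "psd (matrix_inv (transpose G ** G))"
    and det_gram_pos: "0 < det (transpose G ** G)"
proof -
  let ?A = "transpose G ** G"
  have inv: "invertible ?A" by (rule gram_invertible[OF assms])
  have "transpose (G ** matrix_inv ?A) ** (G ** matrix_inv ?A) = transpose (matrix_inv ?A) ** ?A ** matrix_inv ?A"
    by (simp add: matrix_transpose_mul matrix_mul_assoc)
  also have "transpose (matrix_inv ?A) ** ?A = mat 1"
    using matrix_inv_right[OF inv] by (metis matrix_transpose_mul transpose_mat transpose_transpose)
  finally show "psd (matrix_inv ?A)"
    using psd_gram[of "transpose (G ** matrix_inv ?A)"] by simp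
  have "det ?A \<noteq> 0" using inv by (simp add: invertible_det_nz)
  then show "0 < det ?A" using psd_det_nonneg[OF psd_gram[of "transpose G"]] by simp
qed

lemma log2_det_G_le:
  fixes G :: "real^'n^'m" and Q :: "real^'n^'n"
  assumes rk: "rank G = CARD('n)" and Q: "psd Q" and T: "trace Q \<le> T" "0 < T" and s: "0 < s"
  shows "log 2 (det (mat 1 + (1 / s) *\<^sub>R (G ** Q ** transpose G))) \<le>
    CARD('n) * log 2 ((trace (matrix_inv (transpose G ** G)) + T / s) / CARD('n)) + log 2 (det (transpose G ** G))"
proof -
  let ?A = "transpose G ** G"
  let ?b = "trace (matrix_inv ?A)"
  define X where "X = matrix_inv ?A + (1 / s) *\<^sub>R Q"
  have psdX: "psd X" unfolding X_def using psd_inverse_gram[OF rk] Q s by (intro psd_add psd_scaleR) auto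
  have b: "0 \<le> ?b" by (rule psd_trace_nonneg[OF psd_inverse_gram[OF rk]])
  have "trace X / CARD('n) \<le> (?b + T / s) / CARD('n)"
    using T s by (simp add: X_def trace_add trace_scaleR divide_right_mono)
  then have "det X \<le> ((?b + T / s) / CARD('n)) ^ CARD('n)"
    using psd_trace_nonneg[OF psdX] psd_det_le_trace_power[OF psdX] by (meson divide_nonneg_nonneg of_nat_0_le_iff order_trans power_mono)
  moreover have "det (mat 1 + (1 / s) *\<^sub>R (G ** Q ** transpose G)) = det ?A * det X"
  proof -
    have "det (mat 1 + (1 / s) *\<^sub>R (G ** Q ** transpose G)) = det (mat 1 + G ** ((1 / s) *\<^sub>R (Q ** transpose G)))"
      by (simp add: matrix_mult_scaleR_right matrix_mul_assoc)
    also have "\<dots> = det (mat 1 + ((1 / s) *\<^sub>R (Q ** transpose G)) ** G)" by (rule det_id_plus_mult_commute)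
    also have "mat 1 + ((1 / s) *\<^sub>R (Q ** transpose G)) ** G = X ** ?A"
      unfolding X_def using matrix_inv_left[OF gram_invertible[OF rk]]
      by (simp add: matrix_add_rdistrib matrix_mult_scaleR_left matrix_mul_assoc)
    finally show ?thesis by (simp add: det_mul)
  qed
  moreover have "0 < (?b + T / s) / CARD('n)" using b T(2) s by (intro divide_pos_pos add_nonneg_pos) auto
  ultimately show ?thesis
    using log2_le_mult_power det_gram_pos[OF rk] det_id_plus_psd_ge_1[OF psd_scaleR[OF _ psd_sandwich[OF Q]], of "1 / s" G] s
    by (simp add: mult_left_mono)
qed

lemma log2_det_G_ge:
  fixes G :: "real^'n^'m"
  assumes rk: "rank G = CARD('n)" and p: "0 < p" and s: "0 < s"
  shows "CARD('n) * log 2 (p / s) + log 2 (det (transpose G ** G)) \<le>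
    log 2 (det (mat 1 + (1 / s) *\<^sub>R (G ** (p *\<^sub>R mat 1) ** transpose G)))"
proof -
  have "det (mat 1 + (1 / s) *\<^sub>R (G ** (p *\<^sub>R mat 1) ** transpose G)) = det (mat 1 + G ** ((p / s) *\<^sub>R transpose G))"
    by (simp add: matrix_mult_scaleR_left matrix_mult_scaleR_right)
  also have "\<dots> = det (mat 1 + (p / s) *\<^sub>R (transpose G ** G))"
    by (simp add: det_id_plus_mult_commute matrix_mult_scaleR_left)
  finally have "det (transpose G ** G) * (p / s) ^ CARD('n) \<le> det (mat 1 + (1 / s) *\<^sub>R (G ** (p *\<^sub>R mat 1) ** transpose G))"
    using det_id_plus_scaleR_psd_ge[OF psd_gram, of "p / s" "transpose G"] p s by (simp add: mult.commute)
  then show ?thesis using det_gram_pos[OF rk] p s by (intro log2_ge_mult_power) auto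
qed

lemma dual_vectors:
  fixes G :: "real^'n^'m"
  assumes rk: "rank G = CARD('n)"
  obtains y :: "'n \<Rightarrow> real^'m"
  where "\<And>n j. j \<noteq> n \<Longrightarrow> column j G \<bullet> y n = 0" "\<And>n. column n G \<bullet> y n = y n \<bullet> y n"
    "\<And>n. 0 < y n \<bullet> y n"
proof -
  define C where "C = G ** matrix_inv (transpose G ** G)"
  have gc: "column j G \<bullet> column n C = (if j = n then 1 else 0)" for j n
  proof -
    have "column j G \<bullet> column n C = (transpose G ** C) $ j $ n" by (simp add: transpose_mult_entry)
    also have "transpose G ** C = mat 1"
      unfolding C_def by (simp add: matrix_mul_assoc matrix_inv_right[OF gram_invertible[OF rk]])
    finally show ?thesis by (simp add: mat_def)
  qed
  then have cnz: "column n C \<bullet> column n C \<noteq> 0" for n by (metis inner_eq_zero_iff inner_zero_right zero_neq_one)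
  define y where "y n = (1 / (column n C \<bullet> column n C)) *\<^sub>R column n C" for n
  show ?thesis
  proof (rule that)
    show "column j G \<bullet> y n = 0" if "j \<noteq> n" for n j unfolding y_def using gc that by simp
    show "column n G \<bullet> y n = y n \<bullet> y n" for n
      unfolding y_def using gc[of n n] cnz[of n] by (simp add: power2_eq_square)
    show "0 < y n \<bullet> y n" for n unfolding y_def using cnz[of n] by simp
  qed
qed

lemma column_nonzero_if_full_rank:
  fixes G :: "real^'n^'m"
  assumes "rank G = CARD('n)"
  shows "0 < column n G \<bullet> column n G"
proof -
  have "column n G = G *v axis n 1" by (simp add: matrix_vector_mult_basis)
  moreover have "axis n (1::real) \<noteq> 0" by (simp add: axis_eq_0_iff)
  ultimately have "column n G \<noteq> 0"
    using assms full_rank_injective by (metis inj_eq matrix_vector_mult_0_right)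
  then show ?thesis by simp
qed

lemma sum_log2_one_plus_le:
  fixes d Pw :: "'n::finite \<Rightarrow> real"
  assumes d: "\<And>n. d n \<noteq> 0" and Pw: "\<And>n. 0 \<le> Pw n" and T: "(\<Sum>n\<in>UNIV. Pw n) \<le> T" and s: "0 < s"
  shows "(\<Sum>n\<in>UNIV. log 2 (1 + (d n)\<^sup>2 * Pw n / s)) \<le>
    CARD('n) * log 2 (((\<Sum>n\<in>UNIV. 1 / (d n)\<^sup>2) + T / s) / CARD('n)) + log 2 (\<Prod>n\<in>UNIV. (d n)\<^sup>2)"
proof -
  define y where "y n = 1 / (d n)\<^sup>2 + Pw n / s" for n
  define D where "D = (\<Prod>n\<in>UNIV. (d n)\<^sup>2)"
  define b where "b = ((\<Sum>n\<in>UNIV. 1 / (d n)\<^sup>2) + T / s) / CARD('n)"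
  have y: "0 < y n" for n unfolding y_def using Pw[of n] s d[of n] by (simp add: add_pos_nonneg)
  have D: "0 < D" unfolding D_def using d by (simp add: prod_pos)
  have "0 \<le> (\<Sum>n\<in>UNIV. Pw n)" by (rule sum_nonneg) (use Pw in auto)
  then have "0 \<le> T" using T by linarith
  moreover have "0 < (\<Sum>n\<in>UNIV. 1 / (d n)\<^sup>2)" using d by (intro sum_pos) auto
  ultimately have b: "0 < b" unfolding b_def using s by (simp add: add_pos_nonneg)
  have "(\<Sum>n\<in>UNIV. y n) = (\<Sum>n\<in>UNIV. 1 / (d n)\<^sup>2) + (\<Sum>n\<in>UNIV. Pw n) / s"
    unfolding y_def by (simp add: sum.distrib sum_divide_distrib)
  also have "\<dots> \<le> (\<Sum>n\<in>UNIV. 1 / (d n)\<^sup>2) + T / s" using T s by (simp add: divide_right_mono)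
  finally have "(\<Sum>n\<in>UNIV. y n) / CARD('n) \<le> b" unfolding b_def by (simp add: divide_right_mono)
  moreover have "0 \<le> (\<Sum>n\<in>UNIV. y n) / CARD('n)" using y by (simp add: sum_nonneg less_imp_le)
  ultimately have "((\<Sum>n\<in>UNIV. y n) / CARD('n)) ^ CARD('n) \<le> b ^ CARD('n)" by (rule power_mono)
  then have "(\<Prod>n\<in>UNIV. y n) \<le> b ^ CARD('n)"
    using prod_le_mean_power[of y] y by (simp add: less_imp_le)
  then have le: "D * (\<Prod>n\<in>UNIV. y n) \<le> D * b ^ CARD('n)" using D by simp
  have nz: "(d n)\<^sup>2 * y n \<noteq> 0" for n
    using d[of n] y[of n] by simp
  have "(d n)\<^sup>2 * y n = 1 + (d n)\<^sup>2 * Pw n / s" for n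
    using d[of n] by (simp add: y_def distrib_left)
  then have "(\<Sum>n\<in>UNIV. log 2 (1 + (d n)\<^sup>2 * Pw n / s)) = (\<Sum>n\<in>UNIV. log 2 ((d n)\<^sup>2 * y n))"
    by simp
  also have "\<dots> = log 2 (\<Prod>n\<in>UNIV. (d n)\<^sup>2 * y n)"
    using log_prod[of UNIV "\<lambda>n. (d n)\<^sup>2 * y n" 2] nz by simp
  also have "\<dots> = log 2 (D * (\<Prod>n\<in>UNIV. y n))" unfolding D_def by (simp add: prod.distrib)
  also have "\<dots> \<le> log 2 (D * b ^ CARD('n))"
  proof (rule log_mono[OF _ _ le])
    show "0 < D * (\<Prod>n\<in>UNIV. y n)" using D y by (simp add: prod_pos)
  qed simp
  also have "\<dots> = CARD('n) * log 2 b + log 2 D" using log2_mult_power[OF D b] by simp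
  finally show ?thesis unfolding D_def b_def .
qed

section \<open>The MIMO two-way relay channel\<close>

lemma invertible_if_rank_mult:
  fixes R :: "real^'n^'n" and U :: "real^'m^'n"
  assumes "rank (R ** U) = CARD('n)"
  shows "invertible R"
proof -
  have "rank (R ** U) \<le> rank R" by (rule rank_mul_le_left)
  then have "rank R = CARD('n)" using assms rank_bound[of R] by simp
  then show ?thesis by (simp add: invertible_det_nz det_eq_0_rank)
qed

lemma tendsto_0_if_eventually_between:
  fixes g h :: "'a \<Rightarrow> real"
  assumes "\<forall>\<^sub>F x in F. 0 \<le> g x \<and> g x \<le> h x" "(h \<longlongrightarrow> 0) F"
  shows "(g \<longlongrightarrow> 0) F"
proof (rule tendsto_sandwich[of "\<lambda>_. 0" g F h 0])
  show "\<forall>\<^sub>F x in F. 0 \<le> g x" "\<forall>\<^sub>F x in F. g x \<le> h x"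
    using assms(1) by (auto elim: eventually_mono)
qed (use assms(2) in auto)

lemma cSup_between:
  fixes S :: "real set"
  assumes "w \<in> S" "\<And>z. z \<in> S \<Longrightarrow> z \<le> B"
  shows "w \<le> Sup S" "Sup S \<le> B"
proof -
  have "bdd_above S" using assms(2) by (auto simp: bdd_above_def)
  then show "w \<le> Sup S" by (rule cSup_upper[OF assms(1)])
  show "Sup S \<le> B" using assms by (intro cSup_least) auto
qed

lemma psd_scaled_row_projection:
  fixes U :: "real^'m^'n"
  assumes U: "U ** transpose U = mat 1" and q: "0 \<le> q"
  shows "psd (q *\<^sub>R (transpose U ** U))" "trace (q *\<^sub>R (transpose U ** U)) = q * CARD('n)"
proof -
  show "psd (q *\<^sub>R (transpose U ** U))" using psd_gram[of "transpose U"] q by (intro psd_scaleR) auto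
  have "trace (transpose U ** U) = trace (U ** transpose U)" by (rule trace_mul_sym)
  then show "trace (q *\<^sub>R (transpose U ** U)) = q * CARD('n)" using U by (simp add: trace_scaleR trace_I)
qed

lemma pos_log2_le:
  assumes "0 \<le> x" "0 \<le> a"
  shows "pos (a * log 2 x) \<le> a * log 2 (1 + x)"
proof (cases "x = 0")
  case False
  then have "log 2 x \<le> log 2 (1 + x)" using assms by (intro log_mono) auto
  then have "a * log 2 x \<le> a * log 2 (1 + x)" using assms by (intro mult_left_mono) auto
  moreover have "0 \<le> a * log 2 (1 + x)" using assms by simp
  ultimately show ?thesis by (simp add: pos_def)
qed (simp add: pos_def log_def)

lemma upper_tri_diag_nonzero:
  fixes R :: "real^('n::{finite,linorder})^('n::{finite,linorder})"
  assumes "invertible R" "upper_tri R"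
  shows "R$n$n \<noteq> 0"
  using assms by (auto simp: invertible_det_nz det_upper_tri)

lemma sum_log2_diag:
  fixes R :: "real^('n::{finite,linorder})^('n::{finite,linorder})"
  assumes R: "invertible R" "upper_tri R" and c: "0 < c"
  shows "(\<Sum>n\<in>UNIV. log 2 ((R$n$n)\<^sup>2 * c)) = CARD('n) * log 2 c + log 2 ((det R)\<^sup>2)"
proof -
  have "(\<Sum>n\<in>UNIV. log 2 ((R$n$n)\<^sup>2 * c)) = log 2 (\<Prod>n\<in>UNIV. (R$n$n)\<^sup>2 * c)"
    using upper_tri_diag_nonzero[OF R] c by (simp add: log_prod)
  also have "(\<Prod>n\<in>UNIV. (R$n$n)\<^sup>2 * c) = (det R)\<^sup>2 * c ^ CARD('n)"
    by (simp add: det_upper_tri[OF R(2)] prod.distrib power_mult_distrib prod_power_distrib)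
  finally show ?thesis
    using log2_mult_power[of "(det R)\<^sup>2" c] R c by (simp add: invertible_det_nz)
qed

lemma sum_stream_rates_le:
  fixes R :: "real^('n::{finite,linorder})^('n::{finite,linorder})"
  assumes R: "invertible R" "upper_tri R" and a: "0 \<le> a" and s: "0 < s"
    and Pw: "\<And>n. 0 \<le> Pw n" "(\<Sum>n\<in>UNIV. Pw n) \<le> T"
    and Ra: "\<And>n. Ra n \<le> pos (a * log 2 ((\<bar>R $ n $ n\<bar>)\<^sup>2 * Pw n / s))"
  shows "(\<Sum>n\<in>UNIV. Ra n) \<le>
    a * (CARD('n) * log 2 (((\<Sum>n\<in>UNIV. 1 / (R$n$n)\<^sup>2) + T / s) / CARD('n)) + log 2 ((det R)\<^sup>2))"
proof -
  have "(\<Sum>n\<in>UNIV. Ra n) \<le> (\<Sum>n\<in>UNIV. a * log 2 (1 + (R$n$n)\<^sup>2 * Pw n / s))"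
  proof (rule sum_mono)
    fix n
    show "Ra n \<le> a * log 2 (1 + (R$n$n)\<^sup>2 * Pw n / s)"
      using Ra[of n] pos_log2_le[of "(R$n$n)\<^sup>2 * Pw n / s" a] Pw(1)[of n] a s by simp
  qed
  also have "\<dots> \<le> a * (CARD('n) * log 2 (((\<Sum>n\<in>UNIV. 1 / (R$n$n)\<^sup>2) + T / s) / CARD('n)) + log 2 ((det R)\<^sup>2))"
    unfolding sum_distrib_left[symmetric]
    using sum_log2_one_plus_le[OF upper_tri_diag_nonzero[OF R] Pw s] a
    by (simp add: det_upper_tri[OF R(2)] prod_power_distrib mult_left_mono)
  finally show ?thesis .
qed

lemma bc_bound_eq_id_plus_outer:
  "bc_bound \<alpha> s (\<lambda>_. p) G S = (1 - \<alpha>) / 2 * log 2 (det (id_plus_outer (p / s) (\<lambda>n. column n G) S))"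
  unfolding bc_bound_def id_plus_outer_def by (simp add: scaleR_sum_right[symmetric])

lemma id_plus_outer_columns_UNIV:
  "id_plus_outer (p / s) (\<lambda>n. column n G) UNIV = mat 1 + (1 / s) *\<^sub>R (G ** (p *\<^sub>R mat 1) ** transpose G)"
  by (simp add: id_plus_outer_def gram_eq_sum_outer[symmetric] matrix_mult_scaleR_left matrix_mult_scaleR_right)

lemma sum_sic_rates_le_bc_bound:
  assumes "\<alpha> \<le> 1" "0 < p" "0 < s"
  shows "(\<Sum>n\<in>S. (1 - \<alpha>) / 2 * log 2 (1 + p / s * sic_gain (p / s) (\<lambda>n. column n G) n))
    \<le> bc_bound \<alpha> s (\<lambda>_. p) G S"
proof -
  let ?t = "p / s" and ?g = "\<lambda>n. column n G"
  have pos: "0 < 1 + ?t * sic_gain ?t ?g n" for n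
    using sic_gain_nonneg[of ?t ?g n] assms by (simp add: add_pos_nonneg)
  then have "1 + ?t * sic_gain ?t ?g n \<noteq> 0" for n by (metis less_irrefl)
  then have "(\<Sum>n\<in>S. log 2 (1 + ?t * sic_gain ?t ?g n)) = log 2 (\<Prod>n\<in>S. 1 + ?t * sic_gain ?t ?g n)"
    by (simp add: log_prod)
  also have "\<dots> \<le> log 2 (det (id_plus_outer ?t ?g S))"
    using prod_sic_gain_le_det[of ?t ?g S] pos assms by (intro log_mono) (auto intro: prod_pos)
  finally show ?thesis
    using assms unfolding bc_bound_eq_id_plus_outer sum_distrib_left[symmetric]
    by (intro mult_left_mono) auto
qed

lemma sum_sic_rates_ge:
  fixes G :: "real^('n::{finite,linorder})^'m"
  assumes "rank G = CARD('n)" "0 < p" "0 < s"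
  shows "real CARD('n) * log 2 (p / s) + log 2 (det (transpose G ** G))
    \<le> (\<Sum>n\<in>UNIV. log 2 (1 + p / s * sic_gain (p / s) (\<lambda>n. column n G) n))"
proof -
  let ?t = "p / s" and ?g = "\<lambda>n. column n G"
  have pos: "0 < 1 + ?t * sic_gain ?t ?g n" for n
    using sic_gain_nonneg[of ?t ?g n] assms by (simp add: add_pos_nonneg)
  then have "1 + ?t * sic_gain ?t ?g n \<noteq> 0" for n by (metis less_irrefl)
  then have "(\<Sum>n\<in>UNIV. log 2 (1 + ?t * sic_gain ?t ?g n)) = log 2 (\<Prod>n\<in>UNIV. 1 + ?t * sic_gain ?t ?g n)"
    by (simp add: log_prod)
  also have "\<dots> = log 2 (det (id_plus_outer ?t ?g UNIV))"
    using prod_sic_gain_eq_det[of ?t ?g] assms by simp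
  finally have "(\<Sum>n\<in>UNIV. log 2 (1 + ?t * sic_gain ?t ?g n)) = log 2 (det (id_plus_outer ?t ?g UNIV))" .
  then show ?thesis
    using log2_det_G_ge[OF assms] by (simp add: id_plus_outer_columns_UNIV)
qed

locale two_way_relay =
  fixes R1 R2 :: "real^('n::{finite,linorder})^('n::{finite,linorder})"
    and H1 H2 U1 U2 :: "real^('m::finite)^('n::{finite,linorder})"
    and G1 G2 :: "real^('n::{finite,linorder})^('m::finite)"
    and \<alpha> \<beta>1 \<beta>2 \<beta>R \<sigma>2 :: real
  assumes rank_H1: "rank H1 = CARD('n)" and rank_H2: "rank H2 = CARD('n)"
    and rank_G1: "rank G1 = CARD('n)" and rank_G2: "rank G2 = CARD('n)"
    and H1: "H1 = R1 ** U1" and upper_tri_R1: "upper_tri R1" and U1: "U1 ** transpose U1 = mat 1"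
    and H2: "H2 = R2 ** U2" and upper_tri_R2: "upper_tri R2" and U2: "U2 ** transpose U2 = mat 1"
    and \<beta>1: "0 < \<beta>1" and \<beta>2: "0 < \<beta>2" and \<beta>R: "0 < \<beta>R" and \<sigma>2: "0 < \<sigma>2"
    and \<alpha>: "0 < \<alpha>" "\<alpha> < 1" "\<alpha> \<noteq> 1 / 2"
begin

abbreviation Rc :: "real \<Rightarrow> real" where
  "Rc P \<equiv> Rcut \<alpha> (\<beta>1 * P) (\<beta>2 * P) (\<lambda>_. \<beta>R * P) \<sigma>2 \<sigma>2 \<sigma>2 H1 H2 G1 G2"

abbreviation Rd :: "real \<Rightarrow> real" where
  "Rd P \<equiv> Rdist \<alpha> (\<beta>1 * P) (\<beta>2 * P) (\<lambda>_. \<beta>R * P) \<sigma>2 \<sigma>2 \<sigma>2 R1 R2 G1 G2"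

definition cut_rates :: "real \<Rightarrow> real set" where
  "cut_rates P = {Ra1 + Ra2 | Ra1 Ra2 (Q1::((real, 'm) vec, 'm) vec) (Q2::((real, 'm) vec, 'm) vec)
          (QR::((real, 'n) vec, 'n) vec).
        psd Q1 \<and> psd Q2 \<and> psd QR \<and> 0 \<le> Ra1 \<and> 0 \<le> Ra2 \<and>
        trace Q1 \<le> \<beta>1 * P \<and> trace Q2 \<le> \<beta>2 * P \<and> trace QR \<le> (\<Sum>n\<in>(UNIV::'n set). \<beta>R * P) \<and>
        Ra1 \<le> \<alpha> / 2 * log 2 (det (mat 1 + (1 / \<sigma>2) *\<^sub>R (H1 ** Q1 ** transpose H1))) \<and>
        Ra2 \<le> \<alpha> / 2 * log 2 (det (mat 1 + (1 / \<sigma>2) *\<^sub>R (H2 ** Q2 ** transpose H2))) \<and>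
        Ra1 \<le> (1 - \<alpha>) / 2 * log 2 (det (mat 1 + (1 / \<sigma>2) *\<^sub>R (G2 ** QR ** transpose G2))) \<and>
        Ra2 \<le> (1 - \<alpha>) / 2 * log 2 (det (mat 1 + (1 / \<sigma>2) *\<^sub>R (G1 ** QR ** transpose G1)))}"

definition dist_rates :: "real \<Rightarrow> real set" where
  "dist_rates P = {(\<Sum>n\<in>UNIV. Ra1 n) + (\<Sum>n\<in>UNIV. Ra2 n) | (Ra1 :: 'n \<Rightarrow> real) Ra2 Pw1 Pw2.
        (\<forall>n. 0 \<le> Pw1 n \<and> 0 \<le> Pw2 n \<and> 0 \<le> Ra1 n \<and> 0 \<le> Ra2 n) \<and>
        (\<forall>n. Ra1 n \<le> pos (\<alpha> / 2 * log 2 ((\<bar>R1 $ n $ n\<bar>)\<^sup>2 * Pw1 n / \<sigma>2))) \<and>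
        (\<forall>n. Ra2 n \<le> pos (\<alpha> / 2 * log 2 ((\<bar>R2 $ n $ n\<bar>)\<^sup>2 * Pw2 n / \<sigma>2))) \<and>
        (\<forall>S. (\<Sum>n\<in>S. Ra1 n) \<le> bc_bound \<alpha> \<sigma>2 (\<lambda>_. \<beta>R * P) G2 S) \<and>
        (\<forall>S. (\<Sum>n\<in>S. Ra2 n) \<le> bc_bound \<alpha> \<sigma>2 (\<lambda>_. \<beta>R * P) G1 S) \<and>
        (\<Sum>n\<in>UNIV. Pw1 n) \<le> \<beta>1 * P \<and> (\<Sum>n\<in>UNIV. Pw2 n) \<le> \<beta>2 * P}"

lemma Rc_eq: "Rc P = Sup (cut_rates P)" and Rd_eq: "Rd P = Sup (dist_rates P)"
  unfolding Rcut_def Rdist_def cut_rates_def dist_rates_def by simp_all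

lemma invertible_R1: "invertible R1" and invertible_R2: "invertible R2"
  using invertible_if_rank_mult rank_H1 rank_H2 H1 H2 by blast+

lemma \<alpha>_half_nonneg: "0 \<le> \<alpha> / 2" "0 \<le> (1 - \<alpha>) / 2"
  using \<alpha> by auto

text \<open>\<open>mac_rate\<close> and \<open>bc_rate\<close> approximate the log-determinants of a multiple-access link with
  power \<open>\<beta> P\<close> and of a broadcast link with power \<open>\<beta>\<^sub>R P\<close> per relay; \<open>mac_upper\<close> and \<open>bc_upper\<close>
  are the AM-GM bounds of the previous section, \<open>a\<close> being the trace term.\<close>

definition mac_rate :: "((real, 'n) vec, 'n) vec \<Rightarrow> real \<Rightarrow> real \<Rightarrow> real" where
  "mac_rate R \<beta> P = CARD('n) * log 2 (\<beta> * P / (CARD('n) * \<sigma>2)) + log 2 ((det R)\<^sup>2)"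

definition mac_upper :: "real \<Rightarrow> ((real, 'n) vec, 'n) vec \<Rightarrow> real \<Rightarrow> real \<Rightarrow> real" where
  "mac_upper a R \<beta> P = CARD('n) * log 2 ((a + \<beta> * P / \<sigma>2) / CARD('n)) + log 2 ((det R)\<^sup>2)"

definition bc_rate :: "((real, 'n) vec, 'm) vec \<Rightarrow> real \<Rightarrow> real" where
  "bc_rate G P = CARD('n) * log 2 (\<beta>R * P / \<sigma>2) + log 2 (det (transpose G ** G))"

definition bc_upper :: "((real, 'n) vec, 'm) vec \<Rightarrow> real \<Rightarrow> real" where
  "bc_upper G P = CARD('n) * log 2 ((trace (matrix_inv (transpose G ** G)) + CARD('n) * (\<beta>R * P) / \<sigma>2) / CARD('n))
     + log 2 (det (transpose G ** G))"

definition sum_rate_asymptote :: "real \<Rightarrow> real" where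
  "sum_rate_asymptote P =
     min (\<alpha> / 2 * mac_rate R1 \<beta>1 P) ((1 - \<alpha>) / 2 * bc_rate G2 P) +
     min (\<alpha> / 2 * mac_rate R2 \<beta>2 P) ((1 - \<alpha>) / 2 * bc_rate G1 P)"

lemma tendsto_mac_upper_minus_rate:
  assumes "0 \<le> a" "0 < \<beta>"
  shows "((\<lambda>P. mac_upper a R \<beta> P - mac_rate R \<beta> P) \<longlongrightarrow> 0) at_top"
  unfolding mac_upper_def mac_rate_def using assms \<sigma>2 by real_asymp

lemma tendsto_bc_upper_minus_rate:
  assumes "rank G = CARD('n)"
  shows "((\<lambda>P. bc_upper G P - bc_rate G P) \<longlongrightarrow> 0) at_top"
proof -
  have "0 \<le> trace (matrix_inv (transpose G ** G))" by (rule psd_trace_nonneg[OF psd_inverse_gram[OF assms]])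
  then show ?thesis unfolding bc_upper_def bc_rate_def using \<beta>R \<sigma>2 by real_asymp
qed

lemma eventually_mac_rate_le_bc_rate:
  assumes "\<alpha> < 1 / 2" "0 < \<beta>"
  shows "\<forall>\<^sub>F P in at_top. \<alpha> / 2 * mac_rate R \<beta> P \<le> (1 - \<alpha>) / 2 * bc_rate G P"
  unfolding mac_rate_def bc_rate_def using assms \<beta>R \<sigma>2 by real_asymp

lemma eventually_bc_rate_le_mac_rate:
  assumes "1 / 2 < \<alpha>" "0 < \<beta>"
  shows "\<forall>\<^sub>F P in at_top. (1 - \<alpha>) / 2 * bc_rate G P \<le> \<alpha> / 2 * mac_rate R \<beta> P"
  unfolding mac_rate_def bc_rate_def using assms \<beta>R \<sigma>2 by real_asymp

lemma tendsto_minus_sum_rate_asymptote: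
  fixes f :: "real \<Rightarrow> real"
  assumes lower: "\<forall>\<^sub>F P in at_top. sum_rate_asymptote P \<le> f P"
    and upper_mac: "\<forall>\<^sub>F P in at_top. f P \<le> \<alpha> / 2 * (mac_upper a1 R1 \<beta>1 P + mac_upper a2 R2 \<beta>2 P)"
    and upper_bc: "\<forall>\<^sub>F P in at_top. f P \<le> (1 - \<alpha>) / 2 * (bc_upper G2 P + bc_upper G1 P)"
    and a: "0 \<le> a1" "0 \<le> a2"
  shows "((\<lambda>P. f P - sum_rate_asymptote P) \<longlongrightarrow> 0) at_top"
proof (cases "\<alpha> < 1 / 2")
  case True
  let ?e = "\<lambda>P. \<alpha> / 2 * ((mac_upper a1 R1 \<beta>1 P - mac_rate R1 \<beta>1 P) + (mac_upper a2 R2 \<beta>2 P - mac_rate R2 \<beta>2 P))"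
  have ev: "\<forall>\<^sub>F P in at_top. 0 \<le> f P - sum_rate_asymptote P \<and> f P - sum_rate_asymptote P \<le> ?e P"
    using lower upper_mac eventually_mac_rate_le_bc_rate[OF True \<beta>1, of R1 G2]
      eventually_mac_rate_le_bc_rate[OF True \<beta>2, of R2 G1]
  proof eventually_elim
    case (elim P)
    then have "sum_rate_asymptote P = \<alpha> / 2 * mac_rate R1 \<beta>1 P + \<alpha> / 2 * mac_rate R2 \<beta>2 P"
      unfolding sum_rate_asymptote_def by (simp add: min_absorb1)
    with elim(1,2) show ?case by (simp add: distrib_left right_diff_distrib)
  qed
  have "(?e \<longlongrightarrow> \<alpha> / 2 * (0 + 0)) at_top"
    by (intro tendsto_intros tendsto_mac_upper_minus_rate a \<beta>1 \<beta>2)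
  then show ?thesis using tendsto_0_if_eventually_between[OF ev] by simp
next
  case False
  then have hi: "1 / 2 < \<alpha>" using \<alpha>(3) by simp
  let ?e = "\<lambda>P. (1 - \<alpha>) / 2 * ((bc_upper G2 P - bc_rate G2 P) + (bc_upper G1 P - bc_rate G1 P))"
  have ev: "\<forall>\<^sub>F P in at_top. 0 \<le> f P - sum_rate_asymptote P \<and> f P - sum_rate_asymptote P \<le> ?e P"
    using lower upper_bc eventually_bc_rate_le_mac_rate[OF hi \<beta>1, of G2 R1]
      eventually_bc_rate_le_mac_rate[OF hi \<beta>2, of G1 R2]
  proof eventually_elim
    case (elim P)
    then have "sum_rate_asymptote P = (1 - \<alpha>) / 2 * bc_rate G2 P + (1 - \<alpha>) / 2 * bc_rate G1 P"
      unfolding sum_rate_asymptote_def by (simp add: min_absorb2)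
    with elim(1,2) show ?case by (simp add: distrib_left right_diff_distrib)
  qed
  have "(?e \<longlongrightarrow> (1 - \<alpha>) / 2 * (0 + 0)) at_top"
    by (intro tendsto_intros tendsto_bc_upper_minus_rate rank_G1 rank_G2)
  then show ?thesis using tendsto_0_if_eventually_between[OF ev] by simp
qed

lemma log2_det_mac_le:
  assumes "0 < P" "H = R ** U" "invertible R" "U ** transpose U = mat 1" "psd Q" "trace Q \<le> \<beta> * P" "0 < \<beta>"
  shows "log 2 (det (mat 1 + (1 / \<sigma>2) *\<^sub>R (H ** Q ** transpose H))) \<le>
    mac_upper (trace (matrix_inv R ** transpose (matrix_inv R))) R \<beta> P"
  using log2_det_RU_le[OF assms(3-6)] assms(1,2,7) \<sigma>2 by (simp add: mac_upper_def)

lemma log2_det_bc_le: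
  assumes "0 < P" "rank G = CARD('n)" "psd QR" "trace QR \<le> (\<Sum>n\<in>(UNIV::'n set). \<beta>R * P)"
  shows "log 2 (det (mat 1 + (1 / \<sigma>2) *\<^sub>R (G ** QR ** transpose G))) \<le> bc_upper G P"
  using log2_det_G_le[OF assms(2,3), of "CARD('n) * (\<beta>R * P)" \<sigma>2] assms(1,4) \<beta>R \<sigma>2
  by (simp add: bc_upper_def)

lemma mac_rate_le_log2_det:
  assumes "0 < P" "H = R ** U" "invertible R" "U ** transpose U = mat 1" "0 < \<beta>"
  shows "mac_rate R \<beta> P \<le>
    log 2 (det (mat 1 + (1 / \<sigma>2) *\<^sub>R (H ** ((\<beta> * P / CARD('n)) *\<^sub>R (transpose U ** U)) ** transpose H)))"
  using log2_det_RU_ge[OF assms(3,4), of "\<beta> * P / CARD('n)" \<sigma>2] assms(1,2,5) \<sigma>2 by (simp add: mac_rate_def)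

lemma bc_rate_le_log2_det:
  assumes "0 < P" "rank G = CARD('n)"
  shows "bc_rate G P \<le> log 2 (det (mat 1 + (1 / \<sigma>2) *\<^sub>R (G ** ((\<beta>R * P) *\<^sub>R mat 1) ** transpose G)))"
  using log2_det_G_ge[OF assms(2), of "\<beta>R * P" \<sigma>2] \<beta>R assms(1) \<sigma>2 by (simp add: bc_rate_def)

lemma cut_rates_le:
  assumes P: "0 < P" and "z \<in> cut_rates P"
  shows "z \<le> \<alpha> / 2 * (mac_upper (trace (matrix_inv R1 ** transpose (matrix_inv R1))) R1 \<beta>1 P
                      + mac_upper (trace (matrix_inv R2 ** transpose (matrix_inv R2))) R2 \<beta>2 P)"
    and "z \<le> (1 - \<alpha>) / 2 * (bc_upper G2 P + bc_upper G1 P)"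
proof -
  from assms(2) obtain Ra1 Ra2 Q1 Q2 QR where z: "z = Ra1 + Ra2" and Q: "psd Q1" "psd Q2" "psd QR"
    and tr: "trace Q1 \<le> \<beta>1 * P" "trace Q2 \<le> \<beta>2 * P" "trace QR \<le> (\<Sum>n\<in>(UNIV::'n set). \<beta>R * P)"
    and Ra: "Ra1 \<le> \<alpha> / 2 * log 2 (det (mat 1 + (1 / \<sigma>2) *\<^sub>R (H1 ** Q1 ** transpose H1)))"
      "Ra2 \<le> \<alpha> / 2 * log 2 (det (mat 1 + (1 / \<sigma>2) *\<^sub>R (H2 ** Q2 ** transpose H2)))"
      "Ra1 \<le> (1 - \<alpha>) / 2 * log 2 (det (mat 1 + (1 / \<sigma>2) *\<^sub>R (G2 ** QR ** transpose G2)))"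
      "Ra2 \<le> (1 - \<alpha>) / 2 * log 2 (det (mat 1 + (1 / \<sigma>2) *\<^sub>R (G1 ** QR ** transpose G1)))"
    unfolding cut_rates_def by blast
  have "Ra1 \<le> \<alpha> / 2 * mac_upper (trace (matrix_inv R1 ** transpose (matrix_inv R1))) R1 \<beta>1 P"
    using Ra(1) mult_left_mono[OF log2_det_mac_le[OF P H1 invertible_R1 U1 Q(1) tr(1) \<beta>1] \<alpha>_half_nonneg(1)]
    by linarith
  moreover have "Ra2 \<le> \<alpha> / 2 * mac_upper (trace (matrix_inv R2 ** transpose (matrix_inv R2))) R2 \<beta>2 P"
    using Ra(2) mult_left_mono[OF log2_det_mac_le[OF P H2 invertible_R2 U2 Q(2) tr(2) \<beta>2] \<alpha>_half_nonneg(1)]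
    by linarith
  ultimately show "z \<le> \<alpha> / 2 * (mac_upper (trace (matrix_inv R1 ** transpose (matrix_inv R1))) R1 \<beta>1 P
                      + mac_upper (trace (matrix_inv R2 ** transpose (matrix_inv R2))) R2 \<beta>2 P)"
    unfolding z by (simp add: distrib_left)
  have "Ra1 \<le> (1 - \<alpha>) / 2 * bc_upper G2 P"
    using Ra(3) mult_left_mono[OF log2_det_bc_le[OF P rank_G2 Q(3) tr(3)] \<alpha>_half_nonneg(2)] by linarith
  moreover have "Ra2 \<le> (1 - \<alpha>) / 2 * bc_upper G1 P"
    using Ra(4) mult_left_mono[OF log2_det_bc_le[OF P rank_G1 Q(3) tr(3)] \<alpha>_half_nonneg(2)] by linarith
  ultimately show "z \<le> (1 - \<alpha>) / 2 * (bc_upper G2 P + bc_upper G1 P)"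
    unfolding z by (simp add: distrib_left)
qed

text \<open>Uniform power on the row space of \<open>U\<^sub>k\<close> at the sources and on all relays.\<close>

lemma cut_rate_ge_asymptote:
  assumes P: "0 < P"
  shows "\<exists>w\<in>cut_rates P. sum_rate_asymptote P \<le> w"
proof -
  let ?N = "real CARD('n)"
  define Q1 where "Q1 = (\<beta>1 * P / ?N) *\<^sub>R (transpose U1 ** U1)"
  define Q2 where "Q2 = (\<beta>2 * P / ?N) *\<^sub>R (transpose U2 ** U2)"
  define QR :: "((real, 'n) vec, 'n) vec" where "QR = (\<beta>R * P) *\<^sub>R mat 1"
  have Q: "psd Q1" "psd Q2" "psd QR" "trace Q1 \<le> \<beta>1 * P" "trace Q2 \<le> \<beta>2 * P"
    "trace QR \<le> (\<Sum>n\<in>(UNIV::'n set). \<beta>R * P)"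
    using psd_scaled_row_projection[OF U1, of "\<beta>1 * P / ?N"] psd_scaled_row_projection[OF U2, of "\<beta>2 * P / ?N"]
      psd_scaleR[OF _ psd_id, of "\<beta>R * P"] \<beta>1 \<beta>2 \<beta>R P
    by (simp_all add: Q1_def Q2_def QR_def trace_scaleR trace_I)
  define M1 where "M1 = log 2 (det (mat 1 + (1 / \<sigma>2) *\<^sub>R (H1 ** Q1 ** transpose H1)))"
  define M2 where "M2 = log 2 (det (mat 1 + (1 / \<sigma>2) *\<^sub>R (H2 ** Q2 ** transpose H2)))"
  define B1 where "B1 = log 2 (det (mat 1 + (1 / \<sigma>2) *\<^sub>R (G1 ** QR ** transpose G1)))"
  define B2 where "B2 = log 2 (det (mat 1 + (1 / \<sigma>2) *\<^sub>R (G2 ** QR ** transpose G2)))"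
  define Ra1 where "Ra1 = min (\<alpha> / 2 * M1) ((1 - \<alpha>) / 2 * B2)"
  define Ra2 where "Ra2 = min (\<alpha> / 2 * M2) ((1 - \<alpha>) / 2 * B1)"
  have "0 \<le> M1" "0 \<le> M2" "0 \<le> B1" "0 \<le> B2"
    unfolding M1_def M2_def B1_def B2_def using Q \<sigma>2 by (auto intro: log2_det_id_plus_sandwich_nonneg)
  then have "0 \<le> Ra1" "0 \<le> Ra2" unfolding Ra1_def Ra2_def using \<alpha>_half_nonneg by simp_all
  moreover have "Ra1 \<le> \<alpha> / 2 * M1" "Ra1 \<le> (1 - \<alpha>) / 2 * B2" "Ra2 \<le> \<alpha> / 2 * M2" "Ra2 \<le> (1 - \<alpha>) / 2 * B1"
    unfolding Ra1_def Ra2_def by simp_all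
  ultimately have "Ra1 + Ra2 \<in> cut_rates P"
    unfolding cut_rates_def M1_def M2_def B1_def B2_def using Q by blast
  moreover have "sum_rate_asymptote P \<le> Ra1 + Ra2"
  proof -
    have "mac_rate R1 \<beta>1 P \<le> M1" unfolding M1_def Q1_def by (rule mac_rate_le_log2_det[OF P H1 invertible_R1 U1 \<beta>1])
    moreover have "mac_rate R2 \<beta>2 P \<le> M2" unfolding M2_def Q2_def by (rule mac_rate_le_log2_det[OF P H2 invertible_R2 U2 \<beta>2])
    moreover have "bc_rate G1 P \<le> B1" "bc_rate G2 P \<le> B2"
      unfolding B1_def B2_def QR_def by (rule bc_rate_le_log2_det[OF P] rank_G1 rank_G2)+
    ultimately show ?thesis
      unfolding sum_rate_asymptote_def Ra1_def Ra2_def using \<alpha>_half_nonneg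
      by (intro add_mono min.mono mult_left_mono) auto
  qed
  ultimately show ?thesis by blast
qed

lemma Rcut_bounds:
  assumes P: "0 < P"
  shows "sum_rate_asymptote P \<le> Rc P"
    and "Rc P \<le> \<alpha> / 2 * (mac_upper (trace (matrix_inv R1 ** transpose (matrix_inv R1))) R1 \<beta>1 P
                         + mac_upper (trace (matrix_inv R2 ** transpose (matrix_inv R2))) R2 \<beta>2 P)"
    and "Rc P \<le> (1 - \<alpha>) / 2 * (bc_upper G2 P + bc_upper G1 P)"
proof -
  obtain w where "w \<in> cut_rates P" "sum_rate_asymptote P \<le> w" using cut_rate_ge_asymptote[OF P] by blast
  then show "sum_rate_asymptote P \<le> Rc P"
    "Rc P \<le> \<alpha> / 2 * (mac_upper (trace (matrix_inv R1 ** transpose (matrix_inv R1))) R1 \<beta>1 P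
                         + mac_upper (trace (matrix_inv R2 ** transpose (matrix_inv R2))) R2 \<beta>2 P)"
    "Rc P \<le> (1 - \<alpha>) / 2 * (bc_upper G2 P + bc_upper G1 P)"
    using cSup_between[OF _ cut_rates_le(1)[OF P]] cSup_between(2)[OF _ cut_rates_le(2)[OF P]]
    unfolding Rc_eq by fastforce+
qed

lemma bc_bound_le_bc_upper:
  assumes "0 < P" "rank G = CARD('n)"
  shows "bc_bound \<alpha> \<sigma>2 (\<lambda>_. \<beta>R * P) G UNIV \<le> (1 - \<alpha>) / 2 * bc_upper G P"
proof -
  have "log 2 (det (mat 1 + (1 / \<sigma>2) *\<^sub>R (G ** ((\<beta>R * P) *\<^sub>R mat 1) ** transpose G))) \<le> bc_upper G P"
    using log2_det_bc_le[OF assms psd_scaleR[OF _ psd_id]] \<beta>R assms(1) by (simp add: trace_scaleR trace_I)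
  then show ?thesis
    unfolding bc_bound_eq_id_plus_outer id_plus_outer_columns_UNIV using \<alpha>_half_nonneg(2) by (rule mult_left_mono)
qed

lemma dist_rates_le:
  assumes P: "0 < P" and "z \<in> dist_rates P"
  shows "z \<le> \<alpha> / 2 * (mac_upper (\<Sum>n\<in>UNIV. 1 / (R1$n$n)\<^sup>2) R1 \<beta>1 P + mac_upper (\<Sum>n\<in>UNIV. 1 / (R2$n$n)\<^sup>2) R2 \<beta>2 P)"
    and "z \<le> (1 - \<alpha>) / 2 * (bc_upper G2 P + bc_upper G1 P)"
proof -
  from assms(2) obtain Ra1 Ra2 Pw1 Pw2 where z: "z = (\<Sum>n\<in>UNIV. Ra1 n) + (\<Sum>n\<in>UNIV. Ra2 n)"
    and nn: "\<forall>n. 0 \<le> Pw1 n \<and> 0 \<le> Pw2 n \<and> 0 \<le> Ra1 n \<and> 0 \<le> Ra2 n"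
    and Ra: "\<forall>n. Ra1 n \<le> pos (\<alpha> / 2 * log 2 ((\<bar>R1 $ n $ n\<bar>)\<^sup>2 * Pw1 n / \<sigma>2))"
      "\<forall>n. Ra2 n \<le> pos (\<alpha> / 2 * log 2 ((\<bar>R2 $ n $ n\<bar>)\<^sup>2 * Pw2 n / \<sigma>2))"
    and bc: "\<forall>S. (\<Sum>n\<in>S. Ra1 n) \<le> bc_bound \<alpha> \<sigma>2 (\<lambda>_. \<beta>R * P) G2 S"
      "\<forall>S. (\<Sum>n\<in>S. Ra2 n) \<le> bc_bound \<alpha> \<sigma>2 (\<lambda>_. \<beta>R * P) G1 S"
    and Pw: "(\<Sum>n\<in>UNIV. Pw1 n) \<le> \<beta>1 * P" "(\<Sum>n\<in>UNIV. Pw2 n) \<le> \<beta>2 * P"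
    unfolding dist_rates_def by blast
  have "(\<Sum>n\<in>UNIV. Ra1 n) \<le> \<alpha> / 2 * mac_upper (\<Sum>n\<in>UNIV. 1 / (R1$n$n)\<^sup>2) R1 \<beta>1 P"
    unfolding mac_upper_def
    using sum_stream_rates_le[OF invertible_R1 upper_tri_R1 \<alpha>_half_nonneg(1) \<sigma>2, of Pw1 "\<beta>1 * P" Ra1] nn Ra(1) Pw(1)
    by (simp add: add.commute)
  moreover have "(\<Sum>n\<in>UNIV. Ra2 n) \<le> \<alpha> / 2 * mac_upper (\<Sum>n\<in>UNIV. 1 / (R2$n$n)\<^sup>2) R2 \<beta>2 P"
    unfolding mac_upper_def
    using sum_stream_rates_le[OF invertible_R2 upper_tri_R2 \<alpha>_half_nonneg(1) \<sigma>2, of Pw2 "\<beta>2 * P" Ra2] nn Ra(2) Pw(2)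
    by (simp add: add.commute)
  ultimately show "z \<le> \<alpha> / 2 * (mac_upper (\<Sum>n\<in>UNIV. 1 / (R1$n$n)\<^sup>2) R1 \<beta>1 P + mac_upper (\<Sum>n\<in>UNIV. 1 / (R2$n$n)\<^sup>2) R2 \<beta>2 P)"
    unfolding z by (simp add: distrib_left)
  have "(\<Sum>n\<in>UNIV. Ra1 n) \<le> (1 - \<alpha>) / 2 * bc_upper G2 P"
    using bc(1) bc_bound_le_bc_upper[OF P rank_G2] by (meson order_trans)
  moreover have "(\<Sum>n\<in>UNIV. Ra2 n) \<le> (1 - \<alpha>) / 2 * bc_upper G1 P"
    using bc(2) bc_bound_le_bc_upper[OF P rank_G1] by (meson order_trans)
  ultimately show "z \<le> (1 - \<alpha>) / 2 * (bc_upper G2 P + bc_upper G1 P)"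
    unfolding z by (simp add: distrib_left)
qed

text \<open>Per-stream rates of one user pair under equal power \<open>\<beta> P / N\<close> per stream: the multiple-access
  rate of stream \<open>n\<close>, and its successive-decoding rate on the broadcast link.\<close>

definition mac_stream_rate :: "((real, 'n) vec, 'n) vec \<Rightarrow> real \<Rightarrow> real \<Rightarrow> 'n \<Rightarrow> real" where
  "mac_stream_rate R \<beta> P n = log 2 ((R$n$n)\<^sup>2 * (\<beta> * P / CARD('n)) / \<sigma>2)"

definition sic_rate :: "((real, 'n) vec, 'm) vec \<Rightarrow> real \<Rightarrow> 'n \<Rightarrow> real" where
  "sic_rate G P n = log 2 (1 + \<beta>R * P / \<sigma>2 * sic_gain (\<beta>R * P / \<sigma>2) (\<lambda>n. column n G) n)"

lemma sic_rate_nonneg: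
  assumes "0 < P"
  shows "0 \<le> sic_rate G P n"
proof -
  have "0 \<le> \<beta>R * P / \<sigma>2 * sic_gain (\<beta>R * P / \<sigma>2) (\<lambda>n. column n G) n"
    using sic_gain_nonneg[of "\<beta>R * P / \<sigma>2" "\<lambda>n. column n G" n] \<beta>R \<sigma>2 assms by simp
  then show ?thesis unfolding sic_rate_def by simp
qed

lemma sic_rate_bounds:
  assumes "0 < P" "\<And>j. j \<noteq> n \<Longrightarrow> column j G \<bullet> y = 0" "column n G \<bullet> y = y \<bullet> y"
  shows "log 2 (1 + \<beta>R / \<sigma>2 * (y \<bullet> y) * P) \<le> sic_rate G P n"
    and "sic_rate G P n \<le> log 2 (1 + \<beta>R / \<sigma>2 * (column n G \<bullet> column n G) * P)"
proof -
  let ?g = "\<lambda>n. column n G"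
  define t where "t = \<beta>R * P / \<sigma>2"
  have t: "0 \<le> t" using \<beta>R \<sigma>2 assms(1) by (simp add: t_def)
  have tP: "\<beta>R / \<sigma>2 * c * P = t * c" for c by (simp add: t_def)
  have "y \<bullet> y \<le> sic_gain t ?g n" by (rule sic_gain_ge[OF t]) (use assms(2,3) in auto)
  then have "1 + t * (y \<bullet> y) \<le> 1 + t * sic_gain t ?g n" using t by (simp add: mult_left_mono)
  moreover have "0 < 1 + t * (y \<bullet> y)" using t by (simp add: add_pos_nonneg)
  ultimately show "log 2 (1 + \<beta>R / \<sigma>2 * (y \<bullet> y) * P) \<le> sic_rate G P n"
    unfolding sic_rate_def tP t_def[symmetric] by (intro log_mono) auto
  have "sic_gain t ?g n \<le> ?g n \<bullet> ?g n" by (rule sic_gain_le[OF t])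
  then have "1 + t * sic_gain t ?g n \<le> 1 + t * (?g n \<bullet> ?g n)" using t by (simp add: mult_left_mono)
  moreover have "0 < 1 + t * sic_gain t ?g n"
    using t sic_gain_nonneg[OF t, of ?g n] by (simp add: add_pos_nonneg)
  ultimately show "sic_rate G P n \<le> log 2 (1 + \<beta>R / \<sigma>2 * (column n G \<bullet> column n G) * P)"
    unfolding sic_rate_def tP t_def[symmetric] by (intro log_mono) auto
qed

text \<open>Away from \<open>\<alpha> = 1/2\<close> the two stream rates grow like \<open>log P\<close> with the different slopes
  \<open>\<alpha>/2\<close> and \<open>(1-\<alpha>)/2\<close>, so eventually the same one is the smaller for every stream.\<close>

lemma eventually_stream_rates_ordered:
  assumes R: "invertible R" "upper_tri R" and G: "rank G = CARD('n)" and \<beta>: "0 < \<beta>"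
  shows "\<forall>\<^sub>F P in at_top. (\<forall>n. \<alpha> / 2 * mac_stream_rate R \<beta> P n \<le> (1 - \<alpha>) / 2 * sic_rate G P n) \<or>
                         (\<forall>n. (1 - \<alpha>) / 2 * sic_rate G P n \<le> \<alpha> / 2 * mac_stream_rate R \<beta> P n)"
proof (cases "\<alpha> < 1 / 2")
  case True
  obtain y where y: "\<And>n j. j \<noteq> n \<Longrightarrow> column j G \<bullet> y n = 0" "\<And>n. column n G \<bullet> y n = y n \<bullet> y n"
    "\<And>n. 0 < y n \<bullet> y n"
    using dual_vectors[OF G] by blast
  have R2: "0 < (R$n$n)\<^sup>2" for n using upper_tri_diag_nonzero[OF R] by simp
  have "\<forall>\<^sub>F P in at_top. \<forall>n. \<alpha> / 2 * mac_stream_rate R \<beta> P n \<le> (1 - \<alpha>) / 2 * log 2 (1 + \<beta>R / \<sigma>2 * (y n \<bullet> y n) * P)"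
    unfolding mac_stream_rate_def using True R2 y(3) \<beta> \<beta>R \<sigma>2 by (intro eventually_all_finite allI) real_asymp
  then show ?thesis using eventually_gt_at_top[of 0]
  proof eventually_elim
    case (elim P)
    have "\<alpha> / 2 * mac_stream_rate R \<beta> P n \<le> (1 - \<alpha>) / 2 * sic_rate G P n" for n
      using elim(1) mult_left_mono[OF sic_rate_bounds(1)[OF elim(2) y(1,2)] \<alpha>_half_nonneg(2)]
      by (meson order_trans)
    then show ?case by blast
  qed
next
  case False
  then have "1 / 2 < \<alpha>" using \<alpha>(3) by simp
  moreover have "0 < (R$n$n)\<^sup>2" for n using upper_tri_diag_nonzero[OF R] by simp
  ultimately have "\<forall>\<^sub>F P in at_top. \<forall>n. (1 - \<alpha>) / 2 * log 2 (1 + \<beta>R / \<sigma>2 * (column n G \<bullet> column n G) * P)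
      \<le> \<alpha> / 2 * mac_stream_rate R \<beta> P n"
    unfolding mac_stream_rate_def using column_nonzero_if_full_rank[OF G] \<beta> \<beta>R \<sigma>2 \<alpha>(2)
    by (intro eventually_all_finite allI) real_asymp
  then show ?thesis using eventually_gt_at_top[of 0]
  proof eventually_elim
    case (elim P)
    have "j \<noteq> n \<Longrightarrow> column j G \<bullet> 0 = 0" "column n G \<bullet> 0 = 0 \<bullet> (0::real^'m)" for j n by simp_all
    then have "(1 - \<alpha>) / 2 * sic_rate G P n \<le> \<alpha> / 2 * mac_stream_rate R \<beta> P n" for n
      using elim(1) mult_left_mono[OF sic_rate_bounds(2)[OF elim(2)] \<alpha>_half_nonneg(2)]
      by (meson order_trans)
    then show ?case by blast
  qed
qed

text \<open>The distributed scheme for one user pair: equal power on the streams, stream \<open>n\<close> carried at the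
  smaller of its two rates.\<close>

lemma stream_allocation:
  assumes R: "invertible R" "upper_tri R" and G: "rank G = CARD('n)" and \<beta>: "0 < \<beta>"
  shows "\<forall>\<^sub>F P in at_top. \<exists>Ra Pw :: 'n \<Rightarrow> real.
     (\<forall>n. 0 \<le> Pw n \<and> 0 \<le> Ra n) \<and>
     (\<forall>n. Ra n \<le> pos (\<alpha> / 2 * log 2 ((\<bar>R $ n $ n\<bar>)\<^sup>2 * Pw n / \<sigma>2))) \<and>
     (\<forall>S. (\<Sum>n\<in>S. Ra n) \<le> bc_bound \<alpha> \<sigma>2 (\<lambda>_. \<beta>R * P) G S) \<and>
     (\<Sum>n\<in>UNIV. Pw n) \<le> \<beta> * P \<and>
     min (\<alpha> / 2 * mac_rate R \<beta> P) ((1 - \<alpha>) / 2 * bc_rate G P) \<le> (\<Sum>n\<in>UNIV. Ra n)"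
proof -
  have "0 < (R$n$n)\<^sup>2" for n using upper_tri_diag_nonzero[OF R] by simp
  then have "\<forall>\<^sub>F P in at_top. \<forall>n. 0 \<le> mac_stream_rate R \<beta> P n"
    unfolding mac_stream_rate_def using \<beta> \<sigma>2 by (intro eventually_all_finite allI) real_asymp
  with eventually_stream_rates_ordered[OF assms] eventually_gt_at_top[of 0] show ?thesis
  proof eventually_elim
    case (elim P)
    define Pw :: "'n \<Rightarrow> real" where "Pw n = \<beta> * P / CARD('n)" for n
    define Ra where "Ra n = min (\<alpha> / 2 * mac_stream_rate R \<beta> P n) ((1 - \<alpha>) / 2 * sic_rate G P n)" for n
    have "0 \<le> Ra n" for n
      unfolding Ra_def using elim(3) sic_rate_nonneg[OF elim(2)] \<alpha>_half_nonneg by simp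
    moreover have "0 \<le> Pw n" for n using \<beta> elim(2) by (simp add: Pw_def)
    moreover have "Ra n \<le> pos (\<alpha> / 2 * log 2 ((\<bar>R $ n $ n\<bar>)\<^sup>2 * Pw n / \<sigma>2))" for n
      unfolding Ra_def Pw_def mac_stream_rate_def pos_def by simp
    moreover have "(\<Sum>n\<in>S. Ra n) \<le> bc_bound \<alpha> \<sigma>2 (\<lambda>_. \<beta>R * P) G S" for S
    proof -
      have "(\<Sum>n\<in>S. Ra n) \<le> (\<Sum>n\<in>S. (1 - \<alpha>) / 2 * sic_rate G P n)" unfolding Ra_def by (intro sum_mono) simp
      also have "\<dots> \<le> bc_bound \<alpha> \<sigma>2 (\<lambda>_. \<beta>R * P) G S"
        unfolding sic_rate_def using \<alpha>(2) \<beta>R elim(2) \<sigma>2 by (intro sum_sic_rates_le_bc_bound) auto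
      finally show ?thesis .
    qed
    moreover have "(\<Sum>n\<in>UNIV. Pw n) \<le> \<beta> * P" by (simp add: Pw_def)
    moreover have "min (\<alpha> / 2 * mac_rate R \<beta> P) ((1 - \<alpha>) / 2 * bc_rate G P) \<le> (\<Sum>n\<in>UNIV. Ra n)"
      using elim(1)
    proof
      assume le: "\<forall>n. \<alpha> / 2 * mac_stream_rate R \<beta> P n \<le> (1 - \<alpha>) / 2 * sic_rate G P n"
      have "mac_stream_rate R \<beta> P n = log 2 ((R$n$n)\<^sup>2 * (\<beta> * P / (CARD('n) * \<sigma>2)))" for n
        unfolding mac_stream_rate_def by (simp add: field_simps)
      then have "(\<Sum>n\<in>UNIV. mac_stream_rate R \<beta> P n) = mac_rate R \<beta> P"
        using sum_log2_diag[OF R, of "\<beta> * P / (CARD('n) * \<sigma>2)"] \<beta> \<sigma>2 elim(2) by (simp add: mac_rate_def)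
      moreover have "(\<Sum>n\<in>UNIV. Ra n) = \<alpha> / 2 * (\<Sum>n\<in>UNIV. mac_stream_rate R \<beta> P n)"
        using le by (simp add: Ra_def sum_distrib_left min_absorb1)
      ultimately show ?thesis by simp
    next
      assume le: "\<forall>n. (1 - \<alpha>) / 2 * sic_rate G P n \<le> \<alpha> / 2 * mac_stream_rate R \<beta> P n"
      have "bc_rate G P \<le> (\<Sum>n\<in>UNIV. sic_rate G P n)"
        unfolding bc_rate_def sic_rate_def using sum_sic_rates_ge[OF G, of "\<beta>R * P" \<sigma>2] \<beta>R \<sigma>2 elim(2) by simp
      moreover have "(\<Sum>n\<in>UNIV. Ra n) = (1 - \<alpha>) / 2 * (\<Sum>n\<in>UNIV. sic_rate G P n)"
        using le by (simp add: Ra_def sum_distrib_left min_absorb2)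
      ultimately show ?thesis using mult_left_mono[OF _ \<alpha>_half_nonneg(2)] by (simp add: min.coboundedI2)
    qed
    ultimately show ?case by blast
  qed
qed

lemma eventually_dist_rate_ge_asymptote:
  "\<forall>\<^sub>F P in at_top. \<exists>w\<in>dist_rates P. sum_rate_asymptote P \<le> w"
  using stream_allocation[OF invertible_R1 upper_tri_R1 rank_G2 \<beta>1]
    stream_allocation[OF invertible_R2 upper_tri_R2 rank_G1 \<beta>2]
proof eventually_elim
  case (elim P)
  then obtain Ra1 Pw1 Ra2 Pw2 where w1: "\<forall>n. 0 \<le> Pw1 n \<and> 0 \<le> Ra1 n"
    "\<forall>n. Ra1 n \<le> pos (\<alpha> / 2 * log 2 ((\<bar>R1 $ n $ n\<bar>)\<^sup>2 * Pw1 n / \<sigma>2))"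
    "\<forall>S. (\<Sum>n\<in>S. Ra1 n) \<le> bc_bound \<alpha> \<sigma>2 (\<lambda>_. \<beta>R * P) G2 S" "(\<Sum>n\<in>UNIV. Pw1 n) \<le> \<beta>1 * P"
    "min (\<alpha> / 2 * mac_rate R1 \<beta>1 P) ((1 - \<alpha>) / 2 * bc_rate G2 P) \<le> (\<Sum>n\<in>UNIV. Ra1 n)"
    and w2: "\<forall>n. 0 \<le> Pw2 n \<and> 0 \<le> Ra2 n"
    "\<forall>n. Ra2 n \<le> pos (\<alpha> / 2 * log 2 ((\<bar>R2 $ n $ n\<bar>)\<^sup>2 * Pw2 n / \<sigma>2))"
    "\<forall>S. (\<Sum>n\<in>S. Ra2 n) \<le> bc_bound \<alpha> \<sigma>2 (\<lambda>_. \<beta>R * P) G1 S" "(\<Sum>n\<in>UNIV. Pw2 n) \<le> \<beta>2 * P"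
    "min (\<alpha> / 2 * mac_rate R2 \<beta>2 P) ((1 - \<alpha>) / 2 * bc_rate G1 P) \<le> (\<Sum>n\<in>UNIV. Ra2 n)"
    by blast
  have "(\<Sum>n\<in>UNIV. Ra1 n) + (\<Sum>n\<in>UNIV. Ra2 n) \<in> dist_rates P" unfolding dist_rates_def using w1 w2 by blast
  moreover have "sum_rate_asymptote P \<le> (\<Sum>n\<in>UNIV. Ra1 n) + (\<Sum>n\<in>UNIV. Ra2 n)"
    unfolding sum_rate_asymptote_def using w1(5) w2(5) by linarith
  ultimately show ?case by blast
qed

lemma Rdist_bounds:
  "\<forall>\<^sub>F P in at_top. sum_rate_asymptote P \<le> Rd P \<and>
     Rd P \<le> \<alpha> / 2 * (mac_upper (\<Sum>n\<in>UNIV. 1 / (R1$n$n)\<^sup>2) R1 \<beta>1 P + mac_upper (\<Sum>n\<in>UNIV. 1 / (R2$n$n)\<^sup>2) R2 \<beta>2 P) \<and>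
     Rd P \<le> (1 - \<alpha>) / 2 * (bc_upper G2 P + bc_upper G1 P)"
  using eventually_dist_rate_ge_asymptote eventually_gt_at_top[of 0]
proof eventually_elim
  case (elim P)
  then obtain w where "w \<in> dist_rates P" "sum_rate_asymptote P \<le> w" by blast
  then show ?case
    using cSup_between[OF _ dist_rates_le(1)[OF elim(2)]] cSup_between(2)[OF _ dist_rates_le(2)[OF elim(2)]]
    unfolding Rd_eq by fastforce
qed

theorem tendsto_Rcut_minus_Rdist: "((\<lambda>P. Rc P - Rd P) \<longlongrightarrow> 0) at_top"
proof -
  have "((\<lambda>P. Rc P - sum_rate_asymptote P) \<longlongrightarrow> 0) at_top"
  proof (rule tendsto_minus_sum_rate_asymptote)
    show "\<forall>\<^sub>F P in at_top. sum_rate_asymptote P \<le> Rc P"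
      using eventually_gt_at_top[of 0] by (rule eventually_mono) (rule Rcut_bounds(1))
    show "\<forall>\<^sub>F P in at_top. Rc P \<le> \<alpha> / 2 * (mac_upper (trace (matrix_inv R1 ** transpose (matrix_inv R1))) R1 \<beta>1 P
                         + mac_upper (trace (matrix_inv R2 ** transpose (matrix_inv R2))) R2 \<beta>2 P)"
      using eventually_gt_at_top[of 0] by (rule eventually_mono) (rule Rcut_bounds(2))
    show "\<forall>\<^sub>F P in at_top. Rc P \<le> (1 - \<alpha>) / 2 * (bc_upper G2 P + bc_upper G1 P)"
      using eventually_gt_at_top[of 0] by (rule eventually_mono) (rule Rcut_bounds(3))
  qed (rule psd_trace_nonneg[OF psd_gram])+
  moreover have "((\<lambda>P. Rd P - sum_rate_asymptote P) \<longlongrightarrow> 0) at_top"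
    using Rdist_bounds by (intro tendsto_minus_sum_rate_asymptote) (auto elim: eventually_mono intro: sum_nonneg)
  ultimately show ?thesis using tendsto_diff by fastforce
qed

end

theorem theorem3:
  fixes R1 R2 :: "((real, 'n::{finite,linorder}) vec, 'n) vec"
    and H1 H2 :: "((real, 'm::finite) vec, 'n) vec"
    and G1 G2 :: "((real, 'n) vec, 'm) vec"
    and U1 U2 :: "((real, 'm) vec, 'n) vec"
    and \<alpha> \<beta>1 \<beta>2 \<beta>R \<sigma>2 :: real
  assumes "CARD('m) \<ge> CARD('n)"
    and "rank H1 = CARD('n)" and "rank H2 = CARD('n)"
    and "rank G1 = CARD('n)" and "rank G2 = CARD('n)"
    and "H1 = R1 ** U1" and "upper_tri R1" and "U1 ** transpose U1 = mat 1"
    and "H2 = R2 ** U2" and "upper_tri R2" and "U2 ** transpose U2 = mat 1"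
    and "\<beta>1 > 0" and "\<beta>2 > 0" and "\<beta>R > 0" and "\<sigma>2 > 0"
    and "0 < \<alpha>" and "\<alpha> < 1" and "\<alpha> \<noteq> 1 / 2"
  shows "((\<lambda>P. Rcut \<alpha> (\<beta>1 * P) (\<beta>2 * P) (\<lambda>_. \<beta>R * P) \<sigma>2 \<sigma>2 \<sigma>2 H1 H2 G1 G2
              - Rdist \<alpha> (\<beta>1 * P) (\<beta>2 * P) (\<lambda>_. \<beta>R * P) \<sigma>2 \<sigma>2 \<sigma>2 R1 R2 G1 G2)
          \<longlongrightarrow> 0) at_top"
proof -
  interpret two_way_relay R1 R2 H1 H2 U1 U2 G1 G2 \<alpha> \<beta>1 \<beta>2 \<beta>R \<sigma>2
    by unfold_locales (use assms in auto)
  show ?thesis by (rule tendsto_Rcut_minus_Rdist)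
qed

end
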